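(* Let $\Gamma\subseteq A$ be $\Bbbk$-algebras, $\sim$ an equivalence relation on $\mathrm{cfs}(\Gamma)$, with $\Gamma$ a strong Harish-Chandra block subalgebra of $A$ with respect to $\sim$. For $B,C,D\in\mathrm{cfs}(\Gamma)/{\sim}$, the composition rule described in the context yields a well-defined (independent of all choices) $(\Gamma,\Gamma)$-bimodule map $\mathcal A(C,D)\otimes_\Gamma\mathcal A(B,C)\to\mathcal A(B,D)$; it is associative, satisfies $\gamma.\alpha=(\gamma)\circ\alpha$ and $\alpha.\gamma=\alpha\circ(\gamma)$ for $\gamma\in\Gamma$, and makes $\mathcal A$ a category with identity morphisms $(1)\in\mathcal A(B,B)$.
   Context: $\mathrm{cfs}(\Gamma)$: maximal two-sided ideals $\mathfrak m$ with $\dim\Gamma/\mathfrak m<\infty$. For a class $B$, $\mathcal W(B)=\{\mathfrak m_1\cdots\mathfrak m_k:k\ge0,\mathfrak m_i\in B\}$. For a left $\Gamma$-module $V$, $V(B)=\{v:\mathfrak mv=0$ for some $\mathfrak m\in\mathcal W(B)\}$, and for a right module $V(B)=\{v:v\mathfrak m=0$ for some $\mathfrak m\in\mathcal W(B)\}$; $V$ is a strong block module if $V=\bigoplus_BV(B)$ and each $V(B)$ is killed by some $\mathfrak m\in\mathcal W(B)$. $\Gamma$ is a strong Harish-Chandra block subalgebra of $A$ if for all $B$, $\mathfrak m\in\mathcal W(B)$, the left module $A/A\mathfrak m$ and right module $A/\mathfrak mA$ are strong block modules. $\mathcal A(B,C)=\varprojlim_{\mathfrak n\in\mathcal W(C),\mathfrak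 m\in\mathcal W(B)}A/(\mathfrak nA+A\mathfrak m)$; for $\alpha\in\mathcal A(B,C)$, $\alpha_{\mathfrak m,\mathfrak n}$ is its image in $A/(\mathfrak nA+A\mathfrak m)$, and $(a)$ is the image of $a\in A$. Composition: for $\mathfrak m\in\mathcal W(B)$, $\mathfrak l\in\mathcal W(D)$, choose $\mathfrak n\in\mathcal W(C)$ such that the natural maps give bimodule isomorphisms $A/(\mathfrak lA+A\mathfrak n)\cong(A/\mathfrak lA)(C)$ and $A/(\mathfrak nA+A\mathfrak m)\cong(A/A\mathfrak m)(C)$ (such $\mathfrak n$ exists); given $\alpha\in\mathcal A(B,C)$, $\beta\in\mathcal A(C,D)$ choose $a_0,b_0\in A$ with $\alpha_{\mathfrak m,\mathfrak n}=a_0+\mathfrak nA+A\mathfrak m$, $a_0+A\mathfrak m\in(A/A\mathfrak m)(C)$, $\beta_{\mathfrak n,\mathfrak l}=b_0+\mathfrak lA+A\mathfrak n$, $b_0+\mathfrak lA\in(A/\mathfrak lA)(C)$, and define $(\beta\circ\alpha)_{\mathfrak m,\mathfrak l}=b_0a_0+\mathfrak lA+A\mathfrak m$. *)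

theory Defs
  imports Complex_Main
begin

text \<open>The ambient algebra A is the whole type 'a (a ring with 1), made into an
 associative unital k-algebra by a scalar action scale of a field 'k.  The subalgebra Gamma is
 a subset G of 'a.  Classes of the equivalence relation on cfs(Gamma) are sets of ideals.\<close>

definition k_algebra :: "('k::field \<Rightarrow> 'a::ring_1 \<Rightarrow> 'a) \<Rightarrow> bool" where
  "k_algebra scale \<longleftrightarrow> module scale \<and>
     (\<forall>c x y. scale c (x * y) = scale c x * y) \<and> (\<forall>c x y. scale c (x * y) = x * scale c y)"

definition subalgebra :: "('k::field \<Rightarrow> 'a::ring_1 \<Rightarrow> 'a) \<Rightarrow> 'a set \<Rightarrow> bool" where
  "subalgebra scale G \<longleftrightarrow> 0 \<in> G \<and> 1 \<in> G \<and> (\<forall>x\<in>G. \<forall>y\<in>G. x + y \<in> G \<and> x * y \<in> G) \<and>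
     (\<forall>x\<in>G. - x \<in> G) \<and> (\<forall>c. \<forall>x\<in>G. scale c x \<in> G)"

definition two_sided_ideal :: "'a::ring_1 set \<Rightarrow> 'a set \<Rightarrow> bool" where
  "two_sided_ideal G I \<longleftrightarrow> I \<subseteq> G \<and> 0 \<in> I \<and> (\<forall>x\<in>I. \<forall>y\<in>I. x + y \<in> I) \<and> (\<forall>x\<in>I. - x \<in> I) \<and>
     (\<forall>g\<in>G. \<forall>x\<in>I. g * x \<in> I \<and> x * g \<in> I)"

definition maximal_ideal :: "'a::ring_1 set \<Rightarrow> 'a set \<Rightarrow> bool" where
  "maximal_ideal G I \<longleftrightarrow> two_sided_ideal G I \<and> I \<noteq> G \<and>
     (\<forall>J. two_sided_ideal G J \<and> I \<subseteq> J \<longrightarrow> J = I \<or> J = G)"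

text \<open>dim (G / I) finite: finitely many elements of G span G modulo I.\<close>
definition finite_codim :: "('k::field \<Rightarrow> 'a::ring_1 \<Rightarrow> 'a) \<Rightarrow> 'a set \<Rightarrow> 'a set \<Rightarrow> bool" where
  "finite_codim scale G I \<longleftrightarrow>
     (\<exists>F. finite F \<and> F \<subseteq> G \<and> (\<forall>g\<in>G. \<exists>s\<in>module.span scale F. g - s \<in> I))"

definition cfs :: "('k::field \<Rightarrow> 'a::ring_1 \<Rightarrow> 'a) \<Rightarrow> 'a set \<Rightarrow> 'a set set" where
  "cfs scale G = {I. maximal_ideal G I \<and> finite_codim scale G I}"

definition ideal_mult :: "'a::ring_1 set \<Rightarrow> 'a set \<Rightarrow> 'a set" where
  "ideal_mult I J = {(\<Sum>i<(k::nat). f i * g i) | k f g. \<forall>i<k. f i \<in> I \<and> g i \<in> J}"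

inductive_set Wset :: "'a::ring_1 set \<Rightarrow> 'a set set \<Rightarrow> 'a set set" for G B where
  W_one: "G \<in> Wset G B"
| W_mult: "m \<in> Wset G B \<Longrightarrow> p \<in> B \<Longrightarrow> ideal_mult m p \<in> Wset G B"

text \<open>A m (left ideal of A) and m A (right ideal of A), with A = UNIV.\<close>
definition lideal :: "'a::ring_1 set \<Rightarrow> 'a set" where
  "lideal m = {(\<Sum>i<(k::nat). a i * x i) | k a x. \<forall>i<k. x i \<in> m}"

definition rideal :: "'a::ring_1 set \<Rightarrow> 'a set" where
  "rideal m = {(\<Sum>i<(k::nat). x i * a i) | k a x. \<forall>i<k. x i \<in> m}"

text \<open>qI m n = n A + A m (m the right-hand index, n the left-hand index).\<close>
definition qI :: "'a::ring_1 set \<Rightarrow> 'a set \<Rightarrow> 'a set" where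
  "qI m n = {x + y | x y. x \<in> rideal n \<and> y \<in> lideal m}"

definition coset :: "'a::ring_1 \<Rightarrow> 'a set \<Rightarrow> 'a set" where
  "coset a I = {y. y - a \<in> I}"

text \<open>Preimage in A of V(C) for the left Gamma-module V = A/N, resp. right module V = A/N.\<close>
definition lblock :: "'a::ring_1 set \<Rightarrow> 'a set \<Rightarrow> 'a set set \<Rightarrow> 'a set" where
  "lblock G N C = {a. \<exists>n\<in>Wset G C. \<forall>x\<in>n. x * a \<in> N}"

definition rblock :: "'a::ring_1 set \<Rightarrow> 'a set \<Rightarrow> 'a set set \<Rightarrow> 'a set" where
  "rblock G N C = {a. \<exists>n\<in>Wset G C. \<forall>x\<in>n. a * x \<in> N}"

text \<open>A/N is a strong block module (V = direct sum of the V(C), each killed by some element of W(C)),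
  for the left resp. right Gamma-module structure; cls is the set of classes.\<close>
definition strong_block_left :: "'a::ring_1 set \<Rightarrow> 'a set set set \<Rightarrow> 'a set \<Rightarrow> bool" where
  "strong_block_left G cls N \<longleftrightarrow>
     (\<forall>a. \<exists>S f. finite S \<and> S \<subseteq> cls \<and> (\<forall>C\<in>S. f C \<in> lblock G N C) \<and> a - sum f S \<in> N) \<and>
     (\<forall>S f. finite S \<and> S \<subseteq> cls \<and> (\<forall>C\<in>S. f C \<in> lblock G N C) \<and> sum f S \<in> N \<longrightarrow>
        (\<forall>C\<in>S. f C \<in> N)) \<and>
     (\<forall>C\<in>cls. \<exists>n\<in>Wset G C. \<forall>a\<in>lblock G N C. \<forall>x\<in>n. x * a \<in> N)"

definition strong_block_right :: "'a::ring_1 set \<Rightarrow> 'a set set set \<Rightarrow> 'a set \<Rightarrow> bool" where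
  "strong_block_right G cls N \<longleftrightarrow>
     (\<forall>a. \<exists>S f. finite S \<and> S \<subseteq> cls \<and> (\<forall>C\<in>S. f C \<in> rblock G N C) \<and> a - sum f S \<in> N) \<and>
     (\<forall>S f. finite S \<and> S \<subseteq> cls \<and> (\<forall>C\<in>S. f C \<in> rblock G N C) \<and> sum f S \<in> N \<longrightarrow>
        (\<forall>C\<in>S. f C \<in> N)) \<and>
     (\<forall>C\<in>cls. \<exists>n\<in>Wset G C. \<forall>a\<in>rblock G N C. \<forall>x\<in>n. a * x \<in> N)"

definition strong_HC_block :: "'a::ring_1 set \<Rightarrow> 'a set set set \<Rightarrow> bool" where
  "strong_HC_block G cls \<longleftrightarrow>
     (\<forall>B\<in>cls. \<forall>m\<in>Wset G B. strong_block_left G cls (lideal m) \<and> strong_block_right G cls (rideal m))"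

text \<open>Elements of the inverse limit A(B,C): families alpha m n of cosets of n A + A m,
  indexed by m \<in> W(B), n \<in> W(C), compatible under the projections, and empty outside the index set
  (so that equality of families is equality of functions).\<close>
definition Alim :: "'a::ring_1 set \<Rightarrow> 'a set set \<Rightarrow> 'a set set \<Rightarrow> ('a set \<Rightarrow> 'a set \<Rightarrow> 'a set) set" where
  "Alim G B C = {\<alpha>.
     (\<forall>m n. m \<in> Wset G B \<and> n \<in> Wset G C \<longrightarrow> (\<exists>a. \<alpha> m n = coset a (qI m n))) \<and>
     (\<forall>m m' n n'. m \<in> Wset G B \<longrightarrow> m' \<in> Wset G B \<longrightarrow> n \<in> Wset G C \<longrightarrow> n' \<in> Wset G C \<longrightarrow>
        m \<subseteq> m' \<longrightarrow> n \<subseteq> n' \<longrightarrow> \<alpha> m n \<subseteq> \<alpha> m' n') \<and>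
     (\<forall>m n. \<not> (m \<in> Wset G B \<and> n \<in> Wset G C) \<longrightarrow> \<alpha> m n = {})}"

definition lim_of :: "'a::ring_1 set \<Rightarrow> 'a set set \<Rightarrow> 'a set set \<Rightarrow> 'a \<Rightarrow> 'a set \<Rightarrow> 'a set \<Rightarrow> 'a set" where
  "lim_of G B C a = (\<lambda>m n. if m \<in> Wset G B \<and> n \<in> Wset G C then coset a (qI m n) else {})"

definition lim_add :: "('a::ring_1 set \<Rightarrow> 'a set \<Rightarrow> 'a set) \<Rightarrow> ('a set \<Rightarrow> 'a set \<Rightarrow> 'a set) \<Rightarrow> 'a set \<Rightarrow> 'a set \<Rightarrow> 'a set" where
  "lim_add \<alpha> \<beta> = (\<lambda>m n. {y. \<exists>x\<in>\<alpha> m n. \<exists>z\<in>\<beta> m n. y - (x + z) \<in> qI m n})"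

definition lim_lmult :: "'a::ring_1 \<Rightarrow> ('a set \<Rightarrow> 'a set \<Rightarrow> 'a set) \<Rightarrow> 'a set \<Rightarrow> 'a set \<Rightarrow> 'a set" where
  "lim_lmult g \<alpha> = (\<lambda>m n. {y. \<exists>x\<in>\<alpha> m n. y - g * x \<in> qI m n})"

definition lim_rmult :: "('a::ring_1 set \<Rightarrow> 'a set \<Rightarrow> 'a set) \<Rightarrow> 'a \<Rightarrow> 'a set \<Rightarrow> 'a set \<Rightarrow> 'a set" where
  "lim_rmult \<alpha> g = (\<lambda>m n. {y. \<exists>x\<in>\<alpha> m n. y - x * g \<in> qI m n})"

text \<open>Admissible choices (n, a0, b0) in the composition rule, for m \<in> W(B), l \<in> W(D),
  alpha \<in> A(B,C), beta \<in> A(C,D).  The natural maps (A/lA)(C) \<rightarrow> A/(lA+An) and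
  (A/Am)(C) \<rightarrow> A/(nA+Am) are required to be bijective.\<close>
definition valid_choice ::
  "'a::ring_1 set \<Rightarrow> 'a set set \<Rightarrow> 'a set \<Rightarrow> 'a set \<Rightarrow> ('a set \<Rightarrow> 'a set \<Rightarrow> 'a set) \<Rightarrow>
   ('a set \<Rightarrow> 'a set \<Rightarrow> 'a set) \<Rightarrow> 'a set \<Rightarrow> 'a \<Rightarrow> 'a \<Rightarrow> bool" where
  "valid_choice G C m l \<alpha> \<beta> n a0 b0 \<longleftrightarrow>
     n \<in> Wset G C \<and>
     (\<forall>a. \<exists>a'\<in>rblock G (rideal l) C. a - a' \<in> qI n l) \<and>
     (\<forall>a'\<in>rblock G (rideal l) C. a' \<in> qI n l \<longrightarrow> a' \<in> rideal l) \<and>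
     (\<forall>a. \<exists>a'\<in>lblock G (lideal m) C. a - a' \<in> qI m n) \<and>
     (\<forall>a'\<in>lblock G (lideal m) C. a' \<in> qI m n \<longrightarrow> a' \<in> lideal m) \<and>
     \<alpha> m n = coset a0 (qI m n) \<and> a0 \<in> lblock G (lideal m) C \<and>
     \<beta> n l = coset b0 (qI n l) \<and> b0 \<in> rblock G (rideal l) C"

definition hc_comp ::
  "'a::ring_1 set \<Rightarrow> 'a set set \<Rightarrow> 'a set set \<Rightarrow> 'a set set \<Rightarrow> ('a set \<Rightarrow> 'a set \<Rightarrow> 'a set) \<Rightarrow>
   ('a set \<Rightarrow> 'a set \<Rightarrow> 'a set) \<Rightarrow> 'a set \<Rightarrow> 'a set \<Rightarrow> 'a set" where
  "hc_comp G B C D \<beta> \<alpha> = (\<lambda>m l. if m \<in> Wset G B \<and> l \<in> Wset G D then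
      (THE X. \<exists>n a0 b0. valid_choice G C m l \<alpha> \<beta> n a0 b0 \<and> X = coset (b0 * a0) (qI m l)) else {})"

end

theory Submission
  imports Defs
begin

text \<open>Fix m in W(B) and l in W(D). For every n in W(C) the natural map (A/Am)(C) -> A/(nA + Am)
  is onto: for C' different from C the ideals in W(C') and W(C) are comaximal, so the C'-components
  of the block decomposition of A/Am already lie in nA + Am. Once n annihilates (A/Am)(C) the map is
  also injective, because the block decomposition is direct; symmetrically on the right. Hence,
  for every N in W(C) annihilating both blocks, the composite at (m, l) is the class of d c for any
  representative c of alpha at (m, N) lying in (A/Am)(C) and any representative d of beta at (N, l):
  changing d by an element of lA + AN changes d c only by an element of lA + Am. Each identity to be
  proved then reduces to the corresponding identity between such products in A.\<close>

section \<open>Finite sums and the one-sided ideals of A\<close>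

definition finite_sums :: "'a::comm_monoid_add set \<Rightarrow> 'a set" where
  "finite_sums X = {(\<Sum>i<(k::nat). h i) | k h. \<forall>i<k. h i \<in> X}"

lemma finite_sums_zero: "0 \<in> finite_sums X"
  unfolding finite_sums_def by force

lemma finite_sums_least:
  assumes "0 \<in> S" and "\<And>x y. x \<in> S \<Longrightarrow> y \<in> S \<Longrightarrow> x + y \<in> S" and "X \<subseteq> S"
  shows "finite_sums X \<subseteq> S"
proof
  fix y assume "y \<in> finite_sums X"
  then obtain k :: nat and h where y: "y = (\<Sum>i<k. h i)" and h: "\<forall>i<k. h i \<in> X"
    unfolding finite_sums_def by blast
  have "(\<Sum>i<k. h i) \<in> S" if "\<forall>i<k. h i \<in> X" for h
    using that by (induction k) (use assms in auto)
  then show "y \<in> S" using y h by blast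
qed

lemma finite_sums_add_generator:
  assumes "y \<in> finite_sums X" and "x \<in> X"
  shows "y + x \<in> finite_sums X"
proof -
  obtain k :: nat and h where y: "y = (\<Sum>i<k. h i)" and h: "\<forall>i<k. h i \<in> X"
    using assms(1) unfolding finite_sums_def by blast
  have "y + x = (\<Sum>i<Suc k. (h(k := x)) i)" using y by simp
  moreover have "\<forall>i<Suc k. (h(k := x)) i \<in> X" using h assms(2) by (simp add: less_Suc_eq)
  ultimately show ?thesis unfolding finite_sums_def by blast
qed

lemma finite_sums_generator: "x \<in> X \<Longrightarrow> x \<in> finite_sums X"
  using finite_sums_add_generator[OF finite_sums_zero] by fastforce

lemma finite_sums_add:
  assumes "y \<in> finite_sums X" and "z \<in> finite_sums X"
  shows "y + z \<in> finite_sums X"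
proof -
  let ?S = "{z. \<forall>y\<in>finite_sums X. y + z \<in> finite_sums X}"
  have "finite_sums X \<subseteq> ?S"
  proof (rule finite_sums_least)
    show "x + z \<in> ?S" if x: "x \<in> ?S" and z: "z \<in> ?S" for x z
    proof (intro CollectI ballI)
      fix y assume "y \<in> finite_sums X"
      then have "(y + x) + z \<in> finite_sums X" using x z by blast
      then show "y + (x + z) \<in> finite_sums X" by (simp add: add.assoc)
    qed
  qed (auto intro: finite_sums_add_generator)
  then show ?thesis using assms by blast
qed

lemma finite_sums_mono: "X \<subseteq> Y \<Longrightarrow> finite_sums X \<subseteq> finite_sums Y"
  by (rule finite_sums_least) (auto intro: finite_sums_zero finite_sums_add finite_sums_generator)

lemma finite_sums_hom:
  assumes "\<phi> 0 = 0" and "\<And>x y. \<phi> (x + y) = \<phi> x + \<phi> y" and "\<And>x. x \<in> X \<Longrightarrow> \<phi> x \<in> X"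
    and "y \<in> finite_sums X"
  shows "\<phi> y \<in> finite_sums X"
proof -
  have "finite_sums X \<subseteq> {y. \<phi> y \<in> finite_sums X}"
    by (rule finite_sums_least) (use assms in \<open>auto intro: finite_sums_zero finite_sums_add finite_sums_generator\<close>)
  then show ?thesis using assms(4) by blast
qed

lemma sum_products_eq_finite_sums:
  "{(\<Sum>i<(k::nat). f i * g i) | k f g. \<forall>i<k. P (f i) (g i)} = finite_sums {x * y | x y. P x y}"
proof
  show "{(\<Sum>i<(k::nat). f i * g i) | k f g. \<forall>i<k. P (f i) (g i)} \<subseteq> finite_sums {x * y | x y. P x y}"
    unfolding finite_sums_def by blast
next
  show "finite_sums {x * y | x y. P x y} \<subseteq> {(\<Sum>i<(k::nat). f i * g i) | k f g. \<forall>i<k. P (f i) (g i)}"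
  proof
    fix s assume "s \<in> finite_sums {x * y | x y. P x y}"
    then obtain k :: nat and h where s: "s = (\<Sum>i<k. h i)" and h: "\<forall>i<k. \<exists>x y. h i = x * y \<and> P x y"
      unfolding finite_sums_def by blast
    have "\<forall>i. \<exists>p. i < k \<longrightarrow> h i = fst p * snd p \<and> P (fst p) (snd p)" using h by force
    then obtain p where p: "\<forall>i<k. h i = fst (p i) * snd (p i) \<and> P (fst (p i)) (snd (p i))"
      by (rule choice[THEN exE]) blast
    have "s = (\<Sum>i<k. fst (p i) * snd (p i))" using s p by simp
    with p show "s \<in> {(\<Sum>i<(k::nat). f i * g i) | k f g. \<forall>i<k. P (f i) (g i)}"
      by (intro CollectI exI[of _ k] exI[of _ "\<lambda>i. fst (p i)"] exI[of _ "\<lambda>i. snd (p i)"]) auto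
  qed
qed

lemma lideal_eq_finite_sums: "lideal m = finite_sums {a * x | a x. x \<in> m}"
  unfolding lideal_def using sum_products_eq_finite_sums[of "\<lambda>a x. x \<in> m"] by simp

lemma rideal_eq_finite_sums: "rideal m = finite_sums {x * a | x a. x \<in> m}"
proof -
  have "rideal m = {(\<Sum>i<(k::nat). x i * a i) | k x a. \<forall>i<k. x i \<in> m}"
    unfolding rideal_def by blast
  then show ?thesis using sum_products_eq_finite_sums[of "\<lambda>x a. x \<in> m"] by simp
qed

lemma ideal_mult_eq_finite_sums: "ideal_mult I J = finite_sums {x * y | x y. x \<in> I \<and> y \<in> J}"
  unfolding ideal_mult_def using sum_products_eq_finite_sums[of "\<lambda>x y. x \<in> I \<and> y \<in> J"] by simp

lemma lideal_zero: "0 \<in> lideal m"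
  unfolding lideal_eq_finite_sums by (rule finite_sums_zero)

lemma lideal_add: "x \<in> lideal m \<Longrightarrow> y \<in> lideal m \<Longrightarrow> x + y \<in> lideal m"
  unfolding lideal_eq_finite_sums by (rule finite_sums_add)

lemma left_generators_mult_left:
  fixes c :: "'a::semigroup_mult"
  assumes "z \<in> {a * x | a x. x \<in> m}" shows "c * z \<in> {a * x | a x. x \<in> m}"
proof -
  obtain a x where "z = a * x" "x \<in> m" using assms by blast
  then have "c * z = (c * a) * x \<and> x \<in> m" by (simp add: mult.assoc)
  then show ?thesis by blast
qed

lemma left_generators_mult_right:
  fixes g :: "'a::semigroup_mult"
  assumes "\<And>x. x \<in> m \<Longrightarrow> x * g \<in> m" and "z \<in> {a * x | a x. x \<in> m}"
  shows "z * g \<in> {a * x | a x. x \<in> m}"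
proof -
  obtain a x where "z = a * x" "x \<in> m" using assms(2) by blast
  then have "z * g = a * (x * g) \<and> x * g \<in> m" using assms(1) by (simp add: mult.assoc)
  then show ?thesis by blast
qed

lemma right_generators_mult_right:
  fixes c :: "'a::semigroup_mult"
  assumes "z \<in> {x * a | x a. x \<in> m}" shows "z * c \<in> {x * a | x a. x \<in> m}"
proof -
  obtain a x where "z = x * a" "x \<in> m" using assms by blast
  then have "z * c = x * (a * c) \<and> x \<in> m" by (simp add: mult.assoc)
  then show ?thesis by blast
qed

lemma right_generators_mult_left:
  fixes g :: "'a::semigroup_mult"
  assumes "\<And>x. x \<in> m \<Longrightarrow> g * x \<in> m" and "z \<in> {x * a | x a. x \<in> m}"
  shows "g * z \<in> {x * a | x a. x \<in> m}"
proof -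
  obtain a x where "z = x * a" "x \<in> m" using assms(2) by blast
  then have "g * z = (g * x) * a \<and> g * x \<in> m" using assms(1) by (simp add: mult.assoc)
  then show ?thesis by blast
qed

lemma lideal_mult_left: "y \<in> lideal m \<Longrightarrow> c * y \<in> lideal m"
  unfolding lideal_eq_finite_sums
  by (rule finite_sums_hom[where \<phi>="\<lambda>y. c * y", OF mult_zero_right distrib_left left_generators_mult_left])

lemma lideal_uminus: "y \<in> lideal m \<Longrightarrow> - y \<in> lideal m"
  using lideal_mult_left[of y m "- 1"] by simp

lemma lideal_generator: "x \<in> m \<Longrightarrow> a * x \<in> lideal m"
  unfolding lideal_eq_finite_sums by (rule finite_sums_generator) blast

lemma lideal_mono: "m \<subseteq> m' \<Longrightarrow> lideal m \<subseteq> lideal m'"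
  unfolding lideal_eq_finite_sums by (rule finite_sums_mono) blast

lemma lideal_mult_right:
  "(\<And>x. x \<in> m \<Longrightarrow> x * g \<in> m) \<Longrightarrow> y \<in> lideal m \<Longrightarrow> y * g \<in> lideal m"
  unfolding lideal_eq_finite_sums
  by (rule finite_sums_hom[where \<phi>="\<lambda>y. y * g", OF mult_zero_left distrib_right left_generators_mult_right])

lemma rideal_zero: "0 \<in> rideal m"
  unfolding rideal_eq_finite_sums by (rule finite_sums_zero)

lemma rideal_add: "x \<in> rideal m \<Longrightarrow> y \<in> rideal m \<Longrightarrow> x + y \<in> rideal m"
  unfolding rideal_eq_finite_sums by (rule finite_sums_add)

lemma rideal_mult_right: "y \<in> rideal m \<Longrightarrow> y * c \<in> rideal m"
  unfolding rideal_eq_finite_sums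
  by (rule finite_sums_hom[where \<phi>="\<lambda>y. y * c", OF mult_zero_left distrib_right right_generators_mult_right])

lemma rideal_uminus: "y \<in> rideal m \<Longrightarrow> - y \<in> rideal m"
  using rideal_mult_right[of y m "- 1"] by simp

lemma rideal_generator: "x \<in> m \<Longrightarrow> x * a \<in> rideal m"
  unfolding rideal_eq_finite_sums by (rule finite_sums_generator) blast

lemma rideal_mono: "m \<subseteq> m' \<Longrightarrow> rideal m \<subseteq> rideal m'"
  unfolding rideal_eq_finite_sums by (rule finite_sums_mono) blast

lemma rideal_mult_left:
  "(\<And>x. x \<in> m \<Longrightarrow> g * x \<in> m) \<Longrightarrow> y \<in> rideal m \<Longrightarrow> g * y \<in> rideal m"
  unfolding rideal_eq_finite_sums
  by (rule finite_sums_hom[where \<phi>="\<lambda>y. g * y", OF mult_zero_right distrib_left right_generators_mult_left])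

lemma qI_intro: "r \<in> rideal n \<Longrightarrow> l \<in> lideal m \<Longrightarrow> r + l \<in> qI m n"
  unfolding qI_def by blast

lemma qI_cases:
  assumes "y \<in> qI m n"
  obtains r l where "y = r + l" "r \<in> rideal n" "l \<in> lideal m"
  using assms unfolding qI_def by blast

lemma qI_of_lideal: "y \<in> lideal m \<Longrightarrow> y \<in> qI m n"
  using qI_intro[OF rideal_zero] by fastforce

lemma qI_of_rideal: "y \<in> rideal n \<Longrightarrow> y \<in> qI m n"
  using qI_intro[OF _ lideal_zero] by fastforce

lemma qI_zero: "0 \<in> qI m n"
  by (rule qI_of_lideal[OF lideal_zero])

lemma qI_add:
  assumes "x \<in> qI m n" and "y \<in> qI m n"
  shows "x + y \<in> qI m n"
proof -
  obtain r l where "x = r + l" "r \<in> rideal n" "l \<in> lideal m" using assms(1) by (rule qI_cases)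
  moreover obtain r' l' where "y = r' + l'" "r' \<in> rideal n" "l' \<in> lideal m" using assms(2) by (rule qI_cases)
  ultimately have "x + y = (r + r') + (l + l')" "r + r' \<in> rideal n" "l + l' \<in> lideal m"
    by (simp_all add: algebra_simps rideal_add lideal_add)
  then show ?thesis using qI_intro by metis
qed

lemma qI_uminus:
  assumes "y \<in> qI m n" shows "- y \<in> qI m n"
proof -
  obtain r l where "y = r + l" "r \<in> rideal n" "l \<in> lideal m" using assms by (rule qI_cases)
  then show ?thesis using qI_intro[OF rideal_uminus lideal_uminus] by fastforce
qed

lemma qI_diff: "x \<in> qI m n \<Longrightarrow> y \<in> qI m n \<Longrightarrow> x - y \<in> qI m n"
  unfolding diff_conv_add_uminus by (intro qI_add qI_uminus)

lemma qI_sum: "(\<And>C. C \<in> S \<Longrightarrow> f C \<in> qI m n) \<Longrightarrow> sum f S \<in> qI m n"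
  by (induction S rule: infinite_finite_induct) (auto intro: qI_zero qI_add)

lemma qI_mono: "m \<subseteq> m' \<Longrightarrow> n \<subseteq> n' \<Longrightarrow> qI m n \<subseteq> qI m' n'"
  unfolding qI_def using lideal_mono rideal_mono by blast

lemma qI_mult_left:
  assumes "\<And>x. x \<in> n \<Longrightarrow> g * x \<in> n" and "y \<in> qI m n"
  shows "g * y \<in> qI m n"
proof -
  obtain r l where "y = r + l" "r \<in> rideal n" "l \<in> lideal m" using assms(2) by (rule qI_cases)
  then show ?thesis
    using qI_intro[OF rideal_mult_left[OF assms(1)] lideal_mult_left] by (simp add: distrib_left)
qed

lemma qI_mult_right:
  assumes "\<And>x. x \<in> m \<Longrightarrow> x * g \<in> m" and "y \<in> qI m n"
  shows "y * g \<in> qI m n"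
proof -
  obtain r l where "y = r + l" "r \<in> rideal n" "l \<in> lideal m" using assms(2) by (rule qI_cases)
  then show ?thesis
    using qI_intro[OF rideal_mult_right lideal_mult_right[OF assms(1)]] by (simp add: distrib_right)
qed

lemma coset_iff [simp]: "y \<in> coset a I \<longleftrightarrow> y - a \<in> I"
  unfolding coset_def by simp

lemma coset_qI_self: "a \<in> coset a (qI m n)"
  by (simp add: qI_zero)

lemma coset_qI_eqI:
  assumes "a - b \<in> qI m n" shows "coset a (qI m n) = coset b (qI m n)"
proof -
  have "y - a \<in> qI m n \<longleftrightarrow> y - b \<in> qI m n" for y
    using qI_add[OF _ assms, of "y - a"] qI_diff[OF _ assms, of "y - b"] by auto
  then show ?thesis by (intro set_eqI) simp
qed

lemma coset_qI_eq_of_mem: "c \<in> coset a (qI m n) \<Longrightarrow> coset a (qI m n) = coset c (qI m n)"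
  using qI_uminus coset_qI_eqI by fastforce

lemma coset_qI_mono: "m \<subseteq> m' \<Longrightarrow> n \<subseteq> n' \<Longrightarrow> coset a (qI m n) \<subseteq> coset a (qI m' n')"
  using qI_mono[of m m' n n'] by auto

section \<open>The inverse limits A(B,C)\<close>

lemma Alim_coset:
  "\<alpha> \<in> Alim G B C \<Longrightarrow> m \<in> Wset G B \<Longrightarrow> n \<in> Wset G C \<Longrightarrow> \<exists>a. \<alpha> m n = coset a (qI m n)"
  unfolding Alim_def by simp

lemma Alim_mono:
  "\<alpha> \<in> Alim G B C \<Longrightarrow> m \<in> Wset G B \<Longrightarrow> m' \<in> Wset G B \<Longrightarrow> n \<in> Wset G C \<Longrightarrow> n' \<in> Wset G C \<Longrightarrow>
    m \<subseteq> m' \<Longrightarrow> n \<subseteq> n' \<Longrightarrow> \<alpha> m n \<subseteq> \<alpha> m' n'"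
  unfolding Alim_def by simp

lemma Alim_empty: "\<alpha> \<in> Alim G B C \<Longrightarrow> \<not> (m \<in> Wset G B \<and> n \<in> Wset G C) \<Longrightarrow> \<alpha> m n = {}"
  unfolding Alim_def by simp

lemma Alim_eq_coset:
  assumes "\<alpha> \<in> Alim G B C" "m \<in> Wset G B" "n \<in> Wset G C" and "c \<in> \<alpha> m n"
  shows "\<alpha> m n = coset c (qI m n)"
  using Alim_coset[OF assms(1-3)] assms(4) coset_qI_eq_of_mem by metis

lemma Alim_nonempty:
  assumes "\<alpha> \<in> Alim G B C" "m \<in> Wset G B" "n \<in> Wset G C"
  obtains c where "c \<in> \<alpha> m n"
  using Alim_coset[OF assms] coset_qI_self by metis

lemma AlimI:
  assumes coset: "\<And>m n. m \<in> Wset G B \<Longrightarrow> n \<in> Wset G C \<Longrightarrow> \<exists>a. \<alpha> m n = coset a (qI m n)"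
    and common: "\<And>m m' n n'. m \<in> Wset G B \<Longrightarrow> m' \<in> Wset G B \<Longrightarrow> n \<in> Wset G C \<Longrightarrow> n' \<in> Wset G C \<Longrightarrow>
        m \<subseteq> m' \<Longrightarrow> n \<subseteq> n' \<Longrightarrow> \<exists>a. a \<in> \<alpha> m n \<and> a \<in> \<alpha> m' n'"
    and empty: "\<And>m n. \<not> (m \<in> Wset G B \<and> n \<in> Wset G C) \<Longrightarrow> \<alpha> m n = {}"
  shows "\<alpha> \<in> Alim G B C"
proof -
  have "\<alpha> m n \<subseteq> \<alpha> m' n'"
    if mn: "m \<in> Wset G B" "m' \<in> Wset G B" "n \<in> Wset G C" "n' \<in> Wset G C" "m \<subseteq> m'" "n \<subseteq> n'"
    for m m' n n'
  proof -
    obtain a where a: "a \<in> \<alpha> m n" "a \<in> \<alpha> m' n'" using common[OF mn] by blast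
    have "\<alpha> m n = coset a (qI m n)" "\<alpha> m' n' = coset a (qI m' n')"
      using coset mn a coset_qI_eq_of_mem by metis+
    then show ?thesis using coset_qI_mono[OF mn(5,6)] by simp
  qed
  then show ?thesis unfolding Alim_def using coset empty by blast
qed

lemma Alim_eqI:
  assumes "\<alpha> \<in> Alim G B C" "\<beta> \<in> Alim G B C"
    and "\<And>m n. m \<in> Wset G B \<Longrightarrow> n \<in> Wset G C \<Longrightarrow> \<exists>x. x \<in> \<alpha> m n \<and> x \<in> \<beta> m n"
  shows "\<alpha> = \<beta>"
proof (intro ext)
  fix m n
  show "\<alpha> m n = \<beta> m n"
  proof (cases "m \<in> Wset G B \<and> n \<in> Wset G C")
    case True
    then obtain x where "x \<in> \<alpha> m n" "x \<in> \<beta> m n" using assms(3) by blast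
    then show ?thesis using Alim_eq_coset assms(1,2) True by metis
  next
    case False
    then show ?thesis using Alim_empty assms(1,2) by metis
  qed
qed

lemma lim_of_in_Alim: "lim_of G B C g \<in> Alim G B C"
  by (rule AlimI) (auto simp: lim_of_def intro!: exI[of _ g] qI_zero)

lemma lim_of_mem: "m \<in> Wset G B \<Longrightarrow> n \<in> Wset G C \<Longrightarrow> g \<in> lim_of G B C g m n"
  unfolding lim_of_def by (simp add: qI_zero)

lemma lim_add_mem: "x \<in> \<alpha> m n \<Longrightarrow> z \<in> \<beta> m n \<Longrightarrow> x + z \<in> lim_add \<alpha> \<beta> m n"
  unfolding lim_add_def by (intro CollectI bexI[of _ x] bexI[of _ z]) (simp_all add: qI_zero)

lemma lim_add_coset:
  assumes "\<alpha> m n = coset a (qI m n)" and "\<beta> m n = coset b (qI m n)"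
  shows "lim_add \<alpha> \<beta> m n = coset (a + b) (qI m n)"
proof -
  have "y \<in> lim_add \<alpha> \<beta> m n \<longleftrightarrow> y - (a + b) \<in> qI m n" for y
  proof
    assume "y \<in> lim_add \<alpha> \<beta> m n"
    then obtain x z where "x - a \<in> qI m n" "z - b \<in> qI m n" "y - (x + z) \<in> qI m n"
      unfolding lim_add_def using assms by auto
    moreover have "y - (a + b) = (y - (x + z)) + (x - a) + (z - b)" by (simp add: algebra_simps)
    ultimately show "y - (a + b) \<in> qI m n" by (metis qI_add)
  next
    assume "y - (a + b) \<in> qI m n"
    then show "y \<in> lim_add \<alpha> \<beta> m n"
      unfolding lim_add_def using assms coset_qI_self by blast
  qed
  then show ?thesis by (intro set_eqI) simp
qed

lemma lim_add_in_Alim: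
  assumes \<alpha>: "\<alpha> \<in> Alim G B C" and \<beta>: "\<beta> \<in> Alim G B C"
  shows "lim_add \<alpha> \<beta> \<in> Alim G B C"
proof (rule AlimI)
  fix m n assume "m \<in> Wset G B" "n \<in> Wset G C"
  then show "\<exists>a. lim_add \<alpha> \<beta> m n = coset a (qI m n)"
    using Alim_coset[OF \<alpha>] Alim_coset[OF \<beta>] lim_add_coset by metis
next
  fix m m' n n' assume mn: "m \<in> Wset G B" "m' \<in> Wset G B" "n \<in> Wset G C" "n' \<in> Wset G C"
    and "m \<subseteq> m'" "n \<subseteq> n'"
  then have "\<alpha> m n \<subseteq> \<alpha> m' n'" "\<beta> m n \<subseteq> \<beta> m' n'" using Alim_mono \<alpha> \<beta> by metis+
  moreover obtain a b where "a \<in> \<alpha> m n" "b \<in> \<beta> m n" using Alim_nonempty \<alpha> \<beta> mn by metis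
  ultimately show "\<exists>x. x \<in> lim_add \<alpha> \<beta> m n \<and> x \<in> lim_add \<alpha> \<beta> m' n'"
    using lim_add_mem by blast
qed (simp add: lim_add_def Alim_empty[OF \<alpha>])

lemma lim_lmult_mem: "x \<in> \<alpha> m n \<Longrightarrow> g * x \<in> lim_lmult g \<alpha> m n"
  unfolding lim_lmult_def by (intro CollectI bexI[of _ x]) (simp_all add: qI_zero)

lemma lim_lmult_coset:
  assumes g: "\<And>x. x \<in> n \<Longrightarrow> g * x \<in> n" and \<alpha>: "\<alpha> m n = coset a (qI m n)"
  shows "lim_lmult g \<alpha> m n = coset (g * a) (qI m n)"
proof -
  have "y \<in> lim_lmult g \<alpha> m n \<longleftrightarrow> y - g * a \<in> qI m n" for y
  proof
    assume "y \<in> lim_lmult g \<alpha> m n"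
    then obtain x where "x - a \<in> qI m n" "y - g * x \<in> qI m n"
      unfolding lim_lmult_def using \<alpha> by auto
    moreover have "y - g * a = (y - g * x) + g * (x - a)" by (simp add: algebra_simps)
    ultimately show "y - g * a \<in> qI m n" by (metis qI_add qI_mult_left[OF g])
  next
    assume "y - g * a \<in> qI m n"
    then show "y \<in> lim_lmult g \<alpha> m n" unfolding lim_lmult_def using \<alpha> coset_qI_self by blast
  qed
  then show ?thesis by (intro set_eqI) simp
qed

lemma lim_lmult_in_Alim:
  assumes \<alpha>: "\<alpha> \<in> Alim G B C" and g: "\<And>n x. n \<in> Wset G C \<Longrightarrow> x \<in> n \<Longrightarrow> g * x \<in> n"
  shows "lim_lmult g \<alpha> \<in> Alim G B C"
proof (rule AlimI)
  fix m n assume "m \<in> Wset G B" "n \<in> Wset G C"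
  then show "\<exists>a. lim_lmult g \<alpha> m n = coset a (qI m n)"
    using Alim_coset[OF \<alpha>] lim_lmult_coset g by metis
next
  fix m m' n n' assume mn: "m \<in> Wset G B" "m' \<in> Wset G B" "n \<in> Wset G C" "n' \<in> Wset G C"
    and "m \<subseteq> m'" "n \<subseteq> n'"
  then have "\<alpha> m n \<subseteq> \<alpha> m' n'" using Alim_mono \<alpha> by metis
  moreover obtain a where "a \<in> \<alpha> m n" using Alim_nonempty \<alpha> mn by metis
  ultimately show "\<exists>x. x \<in> lim_lmult g \<alpha> m n \<and> x \<in> lim_lmult g \<alpha> m' n'"
    using lim_lmult_mem by blast
qed (simp add: lim_lmult_def Alim_empty[OF \<alpha>])

lemma lim_rmult_mem: "x \<in> \<alpha> m n \<Longrightarrow> x * g \<in> lim_rmult \<alpha> g m n"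
  unfolding lim_rmult_def by (intro CollectI bexI[of _ x]) (simp_all add: qI_zero)

lemma lim_rmult_coset:
  assumes g: "\<And>x. x \<in> m \<Longrightarrow> x * g \<in> m" and \<alpha>: "\<alpha> m n = coset a (qI m n)"
  shows "lim_rmult \<alpha> g m n = coset (a * g) (qI m n)"
proof -
  have "y \<in> lim_rmult \<alpha> g m n \<longleftrightarrow> y - a * g \<in> qI m n" for y
  proof
    assume "y \<in> lim_rmult \<alpha> g m n"
    then obtain x where "x - a \<in> qI m n" "y - x * g \<in> qI m n"
      unfolding lim_rmult_def using \<alpha> by auto
    moreover have "y - a * g = (y - x * g) + (x - a) * g" by (simp add: algebra_simps)
    ultimately show "y - a * g \<in> qI m n" by (metis qI_add qI_mult_right[OF g])
  next
    assume "y - a * g \<in> qI m n"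
    then show "y \<in> lim_rmult \<alpha> g m n" unfolding lim_rmult_def using \<alpha> coset_qI_self by blast
  qed
  then show ?thesis by (intro set_eqI) simp
qed

lemma lim_rmult_in_Alim:
  assumes \<alpha>: "\<alpha> \<in> Alim G B C" and g: "\<And>m x. m \<in> Wset G B \<Longrightarrow> x \<in> m \<Longrightarrow> x * g \<in> m"
  shows "lim_rmult \<alpha> g \<in> Alim G B C"
proof (rule AlimI)
  fix m n assume "m \<in> Wset G B" "n \<in> Wset G C"
  then show "\<exists>a. lim_rmult \<alpha> g m n = coset a (qI m n)"
    using Alim_coset[OF \<alpha>] lim_rmult_coset g by metis
next
  fix m m' n n' assume mn: "m \<in> Wset G B" "m' \<in> Wset G B" "n \<in> Wset G C" "n' \<in> Wset G C"
    and "m \<subseteq> m'" "n \<subseteq> n'"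
  then have "\<alpha> m n \<subseteq> \<alpha> m' n'" using Alim_mono \<alpha> by metis
  moreover obtain a where "a \<in> \<alpha> m n" using Alim_nonempty \<alpha> mn by metis
  ultimately show "\<exists>x. x \<in> lim_rmult \<alpha> g m n \<and> x \<in> lim_rmult \<alpha> g m' n'"
    using lim_rmult_mem by blast
qed (simp add: lim_rmult_def Alim_empty[OF \<alpha>])

lemma lim_rmult_one:
  assumes \<alpha>: "\<alpha> \<in> Alim G B C" shows "lim_rmult \<alpha> 1 = \<alpha>"
proof -
  have "lim_rmult \<alpha> 1 \<in> Alim G B C" by (rule lim_rmult_in_Alim[OF \<alpha>]) simp
  then show ?thesis
  proof (rule Alim_eqI[OF _ \<alpha>])
    fix m n assume "m \<in> Wset G B" "n \<in> Wset G C"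
    then obtain x where "x \<in> \<alpha> m n" using Alim_nonempty[OF \<alpha>] by blast
    then show "\<exists>x. x \<in> lim_rmult \<alpha> 1 m n \<and> x \<in> \<alpha> m n" using lim_rmult_mem[of x \<alpha> m n 1] by auto
  qed
qed

lemma lim_lmult_one:
  assumes \<alpha>: "\<alpha> \<in> Alim G B C" shows "lim_lmult 1 \<alpha> = \<alpha>"
proof -
  have "lim_lmult 1 \<alpha> \<in> Alim G B C" by (rule lim_lmult_in_Alim[OF \<alpha>]) simp
  then show ?thesis
  proof (rule Alim_eqI[OF _ \<alpha>])
    fix m n assume "m \<in> Wset G B" "n \<in> Wset G C"
    then obtain x where "x \<in> \<alpha> m n" using Alim_nonempty[OF \<alpha>] by blast
    then show "\<exists>x. x \<in> lim_lmult 1 \<alpha> m n \<and> x \<in> \<alpha> m n" using lim_lmult_mem[of x \<alpha> m n 1] by auto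
  qed
qed

section \<open>Ideals of the subring and the monoids W(B)\<close>

lemma two_sided_ideal_subset: "two_sided_ideal G I \<Longrightarrow> x \<in> I \<Longrightarrow> x \<in> G"
  unfolding two_sided_ideal_def by blast

lemma two_sided_ideal_zero: "two_sided_ideal G I \<Longrightarrow> 0 \<in> I"
  unfolding two_sided_ideal_def by blast

lemma two_sided_ideal_add: "two_sided_ideal G I \<Longrightarrow> x \<in> I \<Longrightarrow> y \<in> I \<Longrightarrow> x + y \<in> I"
  unfolding two_sided_ideal_def by blast

lemma two_sided_ideal_uminus: "two_sided_ideal G I \<Longrightarrow> x \<in> I \<Longrightarrow> - x \<in> I"
  unfolding two_sided_ideal_def by blast

lemma two_sided_ideal_mult_left: "two_sided_ideal G I \<Longrightarrow> g \<in> G \<Longrightarrow> x \<in> I \<Longrightarrow> g * x \<in> I"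
  unfolding two_sided_ideal_def by blast

lemma two_sided_ideal_mult_right: "two_sided_ideal G I \<Longrightarrow> g \<in> G \<Longrightarrow> x \<in> I \<Longrightarrow> x * g \<in> I"
  unfolding two_sided_ideal_def by blast

lemma ideal_mult_subset:
  assumes "two_sided_ideal G I" and "J \<subseteq> G"
  shows "ideal_mult I J \<subseteq> I"
  unfolding ideal_mult_eq_finite_sums
  by (rule finite_sums_least)
    (use assms two_sided_ideal_zero two_sided_ideal_add two_sided_ideal_mult_right in blast)+

lemma ideal_mult_mono: "I \<subseteq> I' \<Longrightarrow> ideal_mult I J \<subseteq> ideal_mult I' J"
  unfolding ideal_mult_eq_finite_sums by (rule finite_sums_mono) blast

definition comaximal :: "'a::ring_1 set \<Rightarrow> 'a set \<Rightarrow> bool" where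
  "comaximal I J \<longleftrightarrow> (\<exists>i\<in>I. \<exists>j\<in>J. i + j = 1)"

lemma comaximal_sym: "comaximal I J \<Longrightarrow> comaximal J I"
  unfolding comaximal_def by (metis add.commute)

lemma comaximal_ideal_mult:
  assumes I: "two_sided_ideal G I" and J: "two_sided_ideal G J" and K: "two_sided_ideal G K"
    and "comaximal I J" and "comaximal I K"
  shows "comaximal I (ideal_mult J K)"
proof -
  obtain i j where ij: "i \<in> I" "j \<in> J" "i + j = 1" using \<open>comaximal I J\<close> unfolding comaximal_def by blast
  obtain i' k where ik: "i' \<in> I" "k \<in> K" "i' + k = 1" using \<open>comaximal I K\<close> unfolding comaximal_def by blast
  have "(i * i' + i * k + j * i') + j * k = (i + j) * (i' + k)" by (simp add: algebra_simps)
  also have "\<dots> = 1" using ij ik by simp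
  finally have one: "(i * i' + i * k + j * i') + j * k = 1" .
  have "i * i' + i * k + j * i' \<in> I"
    using ij ik two_sided_ideal_subset[OF J] two_sided_ideal_subset[OF I] two_sided_ideal_subset[OF K]
    by (intro two_sided_ideal_add[OF I] two_sided_ideal_mult_right[OF I] two_sided_ideal_mult_left[OF I]) auto
  moreover have "j * k \<in> ideal_mult J K"
    unfolding ideal_mult_eq_finite_sums using ij ik by (intro finite_sums_generator) blast
  ultimately show ?thesis using one unfolding comaximal_def by blast
qed

locale HC_blocks =
  fixes G :: "'a::ring_1 set" and cls :: "'a set set set"
  assumes zero_mem: "0 \<in> G" and one_mem: "1 \<in> G"
    and add_mem: "x \<in> G \<Longrightarrow> y \<in> G \<Longrightarrow> x + y \<in> G"
    and mult_mem: "x \<in> G \<Longrightarrow> y \<in> G \<Longrightarrow> x * y \<in> G"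
    and uminus_mem: "x \<in> G \<Longrightarrow> - x \<in> G"
    and maximal_ideal_of_class: "B \<in> cls \<Longrightarrow> p \<in> B \<Longrightarrow> maximal_ideal G p"
    and classes_disjoint: "B \<in> cls \<Longrightarrow> C \<in> cls \<Longrightarrow> B \<noteq> C \<Longrightarrow> B \<inter> C = {}"
    and strong_HC: "strong_HC_block G cls"
begin

lemma two_sided_ideal_of_class: "B \<in> cls \<Longrightarrow> p \<in> B \<Longrightarrow> two_sided_ideal G p"
  using maximal_ideal_of_class unfolding maximal_ideal_def by blast

lemma two_sided_ideal_sum:
  assumes I: "two_sided_ideal G I" and J: "two_sided_ideal G J"
  shows "two_sided_ideal G {x + y | x y. x \<in> I \<and> y \<in> J}"
  unfolding two_sided_ideal_def
proof (intro conjI ballI)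
  show "{x + y | x y. x \<in> I \<and> y \<in> J} \<subseteq> G"
    using add_mem two_sided_ideal_subset[OF I] two_sided_ideal_subset[OF J] by blast
  show "0 \<in> {x + y | x y. x \<in> I \<and> y \<in> J}"
    using two_sided_ideal_zero[OF I] two_sided_ideal_zero[OF J] by force
next
  fix u v assume "u \<in> {x + y | x y. x \<in> I \<and> y \<in> J}" "v \<in> {x + y | x y. x \<in> I \<and> y \<in> J}"
  then obtain x y x' y' where "u = x + y" "v = x' + y'" "x \<in> I" "y \<in> J" "x' \<in> I" "y' \<in> J" by blast
  then have "u + v = (x + x') + (y + y') \<and> x + x' \<in> I \<and> y + y' \<in> J"
    using two_sided_ideal_add[OF I] two_sided_ideal_add[OF J] by (simp add: algebra_simps)
  then show "u + v \<in> {x + y | x y. x \<in> I \<and> y \<in> J}" by blast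
next
  fix u assume "u \<in> {x + y | x y. x \<in> I \<and> y \<in> J}"
  then obtain x y where "u = x + y" "x \<in> I" "y \<in> J" by blast
  then have "- u = (- x) + (- y) \<and> - x \<in> I \<and> - y \<in> J"
    using two_sided_ideal_uminus[OF I] two_sided_ideal_uminus[OF J] by simp
  then show "- u \<in> {x + y | x y. x \<in> I \<and> y \<in> J}" by blast
next
  fix g u assume g: "g \<in> G" and "u \<in> {x + y | x y. x \<in> I \<and> y \<in> J}"
  then obtain x y where "u = x + y" "x \<in> I" "y \<in> J" by blast
  then have "g * u = g * x + g * y \<and> g * x \<in> I \<and> g * y \<in> J"
    using g two_sided_ideal_mult_left[OF I] two_sided_ideal_mult_left[OF J] by (simp add: distrib_left)
  then show "g * u \<in> {x + y | x y. x \<in> I \<and> y \<in> J}" by blast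
next
  fix g u assume g: "g \<in> G" and "u \<in> {x + y | x y. x \<in> I \<and> y \<in> J}"
  then obtain x y where "u = x + y" "x \<in> I" "y \<in> J" by blast
  then have "u * g = x * g + y * g \<and> x * g \<in> I \<and> y * g \<in> J"
    using g two_sided_ideal_mult_right[OF I] two_sided_ideal_mult_right[OF J] by (simp add: distrib_right)
  then show "u * g \<in> {x + y | x y. x \<in> I \<and> y \<in> J}" by blast
qed

lemma two_sided_ideal_ideal_mult:
  assumes I: "two_sided_ideal G I" and J: "two_sided_ideal G J"
  shows "two_sided_ideal G (ideal_mult I J)"
proof -
  let ?X = "{x * y | x y. x \<in> I \<and> y \<in> J}"
  have uminus_gen: "- z \<in> ?X" if z: "z \<in> ?X" for z
  proof -
    obtain x y where "z = x * y" "x \<in> I" "y \<in> J" using z by blast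
    then have "- z = (- x) * y \<and> - x \<in> I \<and> y \<in> J" using two_sided_ideal_uminus[OF I] by simp
    then show ?thesis by blast
  qed
  have left_gen: "g * z \<in> ?X" if g: "g \<in> G" and z: "z \<in> ?X" for g z
  proof -
    obtain x y where "z = x * y" "x \<in> I" "y \<in> J" using z by blast
    then have "g * z = (g * x) * y \<and> g * x \<in> I \<and> y \<in> J"
      using two_sided_ideal_mult_left[OF I g] by (simp add: mult.assoc)
    then show ?thesis by blast
  qed
  have right_gen: "z * g \<in> ?X" if g: "g \<in> G" and z: "z \<in> ?X" for g z
  proof -
    obtain x y where "z = x * y" "x \<in> I" "y \<in> J" using z by blast
    then have "z * g = x * (y * g) \<and> x \<in> I \<and> y * g \<in> J"
      using two_sided_ideal_mult_right[OF J g] by (simp add: mult.assoc)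
    then show ?thesis by blast
  qed
  have "finite_sums ?X \<subseteq> G"
    by (rule finite_sums_least)
      (use zero_mem add_mem mult_mem two_sided_ideal_subset[OF I] two_sided_ideal_subset[OF J] in blast)+
  moreover have "- z \<in> finite_sums ?X" if "z \<in> finite_sums ?X" for z
    using finite_sums_hom[where \<phi>=uminus, OF _ _ uminus_gen that] by simp
  moreover have "g * z \<in> finite_sums ?X" if "g \<in> G" "z \<in> finite_sums ?X" for g z
    using finite_sums_hom[where \<phi>="\<lambda>y. g * y", OF _ _ left_gen[OF that(1)] that(2)] by (simp add: distrib_left)
  moreover have "z * g \<in> finite_sums ?X" if "g \<in> G" "z \<in> finite_sums ?X" for g z
    using finite_sums_hom[where \<phi>="\<lambda>z. z * g", OF _ _ right_gen[OF that(1)] that(2)] by (simp add: distrib_right)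
  ultimately show ?thesis
    unfolding two_sided_ideal_def ideal_mult_eq_finite_sums by (auto intro: finite_sums_zero finite_sums_add)
qed

lemma Wset_two_sided_ideal:
  assumes C: "C \<in> cls" and n: "n \<in> Wset G C"
  shows "two_sided_ideal G n"
  using n
proof (induction n rule: Wset.induct[case_names one mult])
  case one
  show ?case unfolding two_sided_ideal_def using zero_mem add_mem mult_mem uminus_mem by blast
next
  case (mult n p)
  then show ?case using two_sided_ideal_ideal_mult two_sided_ideal_of_class[OF C] by blast
qed

lemma Wset_subset: "C \<in> cls \<Longrightarrow> n \<in> Wset G C \<Longrightarrow> x \<in> n \<Longrightarrow> x \<in> G"
  using Wset_two_sided_ideal two_sided_ideal_subset by blast

lemma Wset_mult_left: "C \<in> cls \<Longrightarrow> n \<in> Wset G C \<Longrightarrow> g \<in> G \<Longrightarrow> x \<in> n \<Longrightarrow> g * x \<in> n"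
  using Wset_two_sided_ideal two_sided_ideal_mult_left by blast

lemma Wset_mult_right: "C \<in> cls \<Longrightarrow> n \<in> Wset G C \<Longrightarrow> g \<in> G \<Longrightarrow> x \<in> n \<Longrightarrow> x * g \<in> n"
  using Wset_two_sided_ideal two_sided_ideal_mult_right by blast

lemma Wset_directed:
  assumes C: "C \<in> cls" and I: "I \<in> Wset G C" and J: "J \<in> Wset G C"
  shows "\<exists>K\<in>Wset G C. K \<subseteq> I \<and> K \<subseteq> J"
  using J
proof (induction J rule: Wset.induct[case_names one mult])
  case one
  show ?case using I Wset_subset[OF C I] by blast
next
  case (mult J p)
  then obtain K where K: "K \<in> Wset G C" "K \<subseteq> I" "K \<subseteq> J" by blast
  have "ideal_mult K p \<in> Wset G C" using K(1) mult.hyps(2) by (rule Wset.W_mult)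
  moreover have "ideal_mult K p \<subseteq> K"
    using Wset_two_sided_ideal[OF C K(1)] two_sided_ideal_of_class[OF C mult.hyps(2)]
    by (intro ideal_mult_subset) (auto dest: two_sided_ideal_subset)
  moreover have "ideal_mult K p \<subseteq> ideal_mult J p" using K(3) by (rule ideal_mult_mono)
  ultimately show ?case using K(2) by blast
qed

lemma Wset_directed3:
  assumes "C \<in> cls" and "I \<in> Wset G C" "J \<in> Wset G C" "K \<in> Wset G C"
  obtains N where "N \<in> Wset G C" "N \<subseteq> I" "N \<subseteq> J" "N \<subseteq> K"
  using Wset_directed[OF assms(1,2,3)] Wset_directed[OF assms(1) _ assms(4)] by (meson order_trans)

lemma maximal_ideals_comaximal:
  assumes p: "maximal_ideal G p" and q: "maximal_ideal G q" and "p \<noteq> q"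
  shows "comaximal p q"
proof -
  let ?S = "{x + y | x y. x \<in> p \<and> y \<in> q}"
  have ideals: "two_sided_ideal G p" "two_sided_ideal G q"
    using p q unfolding maximal_ideal_def by blast+
  have "p \<subseteq> ?S" "q \<subseteq> ?S"
    using two_sided_ideal_zero[OF ideals(1)] two_sided_ideal_zero[OF ideals(2)] by force+
  have "?S \<noteq> p"
  proof
    assume "?S = p"
    then have "q \<subseteq> p" using \<open>q \<subseteq> ?S\<close> by simp
    then show False using q ideals(1) \<open>p \<noteq> q\<close> p unfolding maximal_ideal_def by blast
  qed
  then have "?S = G"
    using p two_sided_ideal_sum[OF ideals] \<open>p \<subseteq> ?S\<close> unfolding maximal_ideal_def by blast
  then show ?thesis using one_mem unfolding comaximal_def by force
qed

lemma Wset_comaximal: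
  assumes B: "B \<in> cls" and C: "C \<in> cls" and "B \<noteq> C" and I: "I \<in> Wset G B" and J: "J \<in> Wset G C"
  shows "comaximal I J"
proof -
  have class_comaximal: "comaximal p J" if p: "p \<in> B" for p
    using J
  proof (induction J rule: Wset.induct[case_names one mult])
    case one
    show ?case using two_sided_ideal_zero[OF two_sided_ideal_of_class[OF B p]] one_mem
      unfolding comaximal_def by force
  next
    case (mult J q)
    have "p \<noteq> q" using classes_disjoint[OF B C \<open>B \<noteq> C\<close>] p mult.hyps(2) by blast
    then have "comaximal p q" using maximal_ideals_comaximal maximal_ideal_of_class B C p mult.hyps(2) by blast
    then show ?case
      using comaximal_ideal_mult two_sided_ideal_of_class[OF B p] two_sided_ideal_of_class[OF C mult.hyps(2)]
        Wset_two_sided_ideal[OF C mult.hyps(1)] mult.IH by blast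
  qed
  show ?thesis
    using I
  proof (induction I rule: Wset.induct[case_names one mult])
    case one
    show ?case using two_sided_ideal_zero[OF Wset_two_sided_ideal[OF C J]] one_mem
      unfolding comaximal_def by force
  next
    case (mult I p)
    then show ?case
      using comaximal_ideal_mult[OF Wset_two_sided_ideal[OF C J] Wset_two_sided_ideal[OF B mult.hyps(1)]
          two_sided_ideal_of_class[OF B mult.hyps(2)]]
        comaximal_sym class_comaximal by blast
  qed
qed

end

section \<open>The block decompositions of A/Am and A/lA\<close>

context HC_blocks
begin

lemma lblock_zero: "0 \<in> lblock G (lideal m) C"
  unfolding lblock_def using Wset.W_one lideal_zero by fastforce

lemma rblock_zero: "0 \<in> rblock G (rideal m) C"
  unfolding rblock_def using Wset.W_one rideal_zero by fastforce

lemma lblock_add: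
  assumes C: "C \<in> cls" and "a \<in> lblock G (lideal m) C" and "b \<in> lblock G (lideal m) C"
  shows "a + b \<in> lblock G (lideal m) C"
proof -
  obtain n1 n2 where n: "n1 \<in> Wset G C" "\<forall>x\<in>n1. x * a \<in> lideal m" "n2 \<in> Wset G C" "\<forall>x\<in>n2. x * b \<in> lideal m"
    using assms(2,3) unfolding lblock_def by blast
  obtain K where K: "K \<in> Wset G C" "K \<subseteq> n1" "K \<subseteq> n2" using Wset_directed[OF C n(1,3)] by blast
  then have "\<forall>x\<in>K. x * (a + b) \<in> lideal m" using n by (auto simp: distrib_left intro!: lideal_add)
  with K(1) show ?thesis unfolding lblock_def by blast
qed

lemma rblock_add:
  assumes C: "C \<in> cls" and "a \<in> rblock G (rideal m) C" and "b \<in> rblock G (rideal m) C"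
  shows "a + b \<in> rblock G (rideal m) C"
proof -
  obtain n1 n2 where n: "n1 \<in> Wset G C" "\<forall>x\<in>n1. a * x \<in> rideal m" "n2 \<in> Wset G C" "\<forall>x\<in>n2. b * x \<in> rideal m"
    using assms(2,3) unfolding rblock_def by blast
  obtain K where K: "K \<in> Wset G C" "K \<subseteq> n1" "K \<subseteq> n2" using Wset_directed[OF C n(1,3)] by blast
  then have "\<forall>x\<in>K. (a + b) * x \<in> rideal m" using n by (auto simp: distrib_right intro!: rideal_add)
  with K(1) show ?thesis unfolding rblock_def by blast
qed

lemma lblock_mult_left:
  assumes C: "C \<in> cls" and g: "g \<in> G" and "a \<in> lblock G (lideal m) C"
  shows "g * a \<in> lblock G (lideal m) C"
proof -
  obtain n where n: "n \<in> Wset G C" "\<forall>x\<in>n. x * a \<in> lideal m" using assms(3) unfolding lblock_def by blast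
  then have "\<forall>x\<in>n. x * (g * a) \<in> lideal m"
    using Wset_mult_right[OF C n(1) g] by (simp add: mult.assoc[symmetric])
  then show ?thesis unfolding lblock_def using n(1) by blast
qed

lemma rblock_mult_right:
  assumes C: "C \<in> cls" and g: "g \<in> G" and "a \<in> rblock G (rideal m) C"
  shows "a * g \<in> rblock G (rideal m) C"
proof -
  obtain n where n: "n \<in> Wset G C" "\<forall>x\<in>n. a * x \<in> rideal m" using assms(3) unfolding rblock_def by blast
  then have "\<forall>x\<in>n. (a * g) * x \<in> rideal m"
    using Wset_mult_left[OF C n(1) g] by (simp add: mult.assoc)
  then show ?thesis unfolding rblock_def using n(1) by blast
qed

lemma lblock_uminus: "C \<in> cls \<Longrightarrow> a \<in> lblock G (lideal m) C \<Longrightarrow> - a \<in> lblock G (lideal m) C"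
  using lblock_mult_left[OF _ uminus_mem[OF one_mem]] by fastforce

lemma rblock_uminus: "C \<in> cls \<Longrightarrow> a \<in> rblock G (rideal m) C \<Longrightarrow> - a \<in> rblock G (rideal m) C"
  using rblock_mult_right[OF _ uminus_mem[OF one_mem]] by fastforce

lemma lblock_mono: "m \<subseteq> m' \<Longrightarrow> lblock G (lideal m) C \<subseteq> lblock G (lideal m') C"
  unfolding lblock_def using lideal_mono[of m m'] by blast

lemma strong_block_modules:
  "B \<in> cls \<Longrightarrow> m \<in> Wset G B \<Longrightarrow> strong_block_left G cls (lideal m) \<and> strong_block_right G cls (rideal m)"
  using strong_HC unfolding strong_HC_block_def by blast

lemma lblock_decomposition:
  assumes "B \<in> cls" "m \<in> Wset G B"
  obtains S f where "finite S" "S \<subseteq> cls" "\<forall>C\<in>S. f C \<in> lblock G (lideal m) C" "a - sum f S \<in> lideal m"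
proof -
  have "\<forall>a. \<exists>S f. finite S \<and> S \<subseteq> cls \<and> (\<forall>C\<in>S. f C \<in> lblock G (lideal m) C) \<and> a - sum f S \<in> lideal m"
    using strong_block_modules[OF assms] unfolding strong_block_left_def by (elim conjE)
  then show ?thesis using that by blast
qed

lemma rblock_decomposition:
  assumes "B \<in> cls" "m \<in> Wset G B"
  obtains S f where "finite S" "S \<subseteq> cls" "\<forall>C\<in>S. f C \<in> rblock G (rideal m) C" "a - sum f S \<in> rideal m"
proof -
  have "\<forall>a. \<exists>S f. finite S \<and> S \<subseteq> cls \<and> (\<forall>C\<in>S. f C \<in> rblock G (rideal m) C) \<and> a - sum f S \<in> rideal m"
    using strong_block_modules[OF assms] unfolding strong_block_right_def by (elim conjE)
  then show ?thesis using that by blast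
qed

definition blocks_independent :: "('a set set \<Rightarrow> 'a set) \<Rightarrow> 'a set \<Rightarrow> bool" where
  "blocks_independent blk N \<longleftrightarrow>
     (\<forall>S f. finite S \<and> S \<subseteq> cls \<and> (\<forall>C\<in>S. f C \<in> blk C) \<and> sum f S \<in> N \<longrightarrow> (\<forall>C\<in>S. f C \<in> N))"

lemma lblock_independent: "B \<in> cls \<Longrightarrow> m \<in> Wset G B \<Longrightarrow> blocks_independent (lblock G (lideal m)) (lideal m)"
  using strong_block_modules unfolding strong_block_left_def blocks_independent_def by blast

lemma rblock_independent: "B \<in> cls \<Longrightarrow> m \<in> Wset G B \<Longrightarrow> blocks_independent (rblock G (rideal m)) (rideal m)"
  using strong_block_modules unfolding strong_block_right_def blocks_independent_def by blast

definition annihilates_lblock :: "'a set \<Rightarrow> 'a set set \<Rightarrow> 'a set \<Rightarrow> bool" where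
  "annihilates_lblock m C n \<longleftrightarrow> (\<forall>a\<in>lblock G (lideal m) C. \<forall>x\<in>n. x * a \<in> lideal m)"

definition annihilates_rblock :: "'a set \<Rightarrow> 'a set set \<Rightarrow> 'a set \<Rightarrow> bool" where
  "annihilates_rblock l C n \<longleftrightarrow> (\<forall>b\<in>rblock G (rideal l) C. \<forall>x\<in>n. b * x \<in> rideal l)"

lemma annihilates_lblock_subset: "annihilates_lblock m C n \<Longrightarrow> n' \<subseteq> n \<Longrightarrow> annihilates_lblock m C n'"
  unfolding annihilates_lblock_def by blast

lemma annihilates_rblock_subset: "annihilates_rblock l C n \<Longrightarrow> n' \<subseteq> n \<Longrightarrow> annihilates_rblock l C n'"
  unfolding annihilates_rblock_def by blast

lemma lblock_annihilator:
  assumes "B \<in> cls" "m \<in> Wset G B" "C \<in> cls"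
  obtains n where "n \<in> Wset G C" "annihilates_lblock m C n"
proof -
  have "\<forall>C\<in>cls. \<exists>n\<in>Wset G C. \<forall>a\<in>lblock G (lideal m) C. \<forall>x\<in>n. x * a \<in> lideal m"
    using strong_block_modules[OF assms(1,2)] unfolding strong_block_left_def by (elim conjE)
  then show ?thesis using that assms(3) unfolding annihilates_lblock_def by blast
qed

lemma rblock_annihilator:
  assumes "B \<in> cls" "m \<in> Wset G B" "C \<in> cls"
  obtains n where "n \<in> Wset G C" "annihilates_rblock m C n"
proof -
  have "\<forall>C\<in>cls. \<exists>n\<in>Wset G C. \<forall>a\<in>rblock G (rideal m) C. \<forall>x\<in>n. a * x \<in> rideal m"
    using strong_block_modules[OF assms(1,2)] unfolding strong_block_right_def by (elim conjE)
  then show ?thesis using that assms(3) unfolding annihilates_rblock_def by blast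
qed

end

section \<open>Identifying the C-blocks with quotients of A\<close>

context HC_blocks
begin

lemma lblock_other_class_in_qI:
  assumes C: "C \<in> cls" and C': "C' \<in> cls" "C' \<noteq> C" and n: "n \<in> Wset G C"
    and b: "b \<in> lblock G (lideal m) C'"
  shows "b \<in> qI m n"
proof -
  obtain n' where n': "n' \<in> Wset G C'" "\<forall>x\<in>n'. x * b \<in> lideal m" using b unfolding lblock_def by blast
  obtain i j where ij: "i \<in> n'" "j \<in> n" "i + j = 1"
    using Wset_comaximal[OF C'(1) C C'(2) n'(1) n] unfolding comaximal_def by blast
  have "b = i * b + j * b" using ij(3) by (metis distrib_right mult_1_left)
  moreover have "i * b \<in> qI m n" using n'(2) ij(1) qI_of_lideal by blast
  moreover have "j * b \<in> qI m n" using ij(2) by (intro qI_of_rideal rideal_generator)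
  ultimately show ?thesis using qI_add by metis
qed

lemma rblock_other_class_in_qI:
  assumes C: "C \<in> cls" and C': "C' \<in> cls" "C' \<noteq> C" and n: "n \<in> Wset G C"
    and b: "b \<in> rblock G (rideal l) C'"
  shows "b \<in> qI n l"
proof -
  obtain n' where n': "n' \<in> Wset G C'" "\<forall>x\<in>n'. b * x \<in> rideal l" using b unfolding rblock_def by blast
  obtain i j where ij: "i \<in> n'" "j \<in> n" "i + j = 1"
    using Wset_comaximal[OF C'(1) C C'(2) n'(1) n] unfolding comaximal_def by blast
  have "b = b * i + b * j" using ij(3) by (metis distrib_left mult_1_right)
  moreover have "b * i \<in> qI n l" using n'(2) ij(1) qI_of_rideal by blast
  moreover have "b * j \<in> qI n l" using ij(2) by (intro qI_of_lideal lideal_generator)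
  ultimately show ?thesis using qI_add by metis
qed

lemma lblock_represents:
  assumes B: "B \<in> cls" and C: "C \<in> cls" and m: "m \<in> Wset G B" and n: "n \<in> Wset G C"
  obtains a' where "a' \<in> lblock G (lideal m) C" "a - a' \<in> qI m n"
proof -
  obtain S f where S: "finite S" "S \<subseteq> cls" "\<forall>C\<in>S. f C \<in> lblock G (lideal m) C"
    and a: "a - sum f S \<in> lideal m"
    using lblock_decomposition[OF B m, where a = a] by blast
  define a' where "a' = (if C \<in> S then f C else 0)"
  have "a' \<in> lblock G (lideal m) C" using S(3) lblock_zero by (simp add: a'_def)
  moreover have "sum f (S - {C}) \<in> qI m n"
    using S by (intro qI_sum lblock_other_class_in_qI[OF C _ _ n]) auto
  moreover have "a - a' = (a - sum f S) + sum f (S - {C})"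
    by (simp add: a'_def sum_diff1[OF S(1)])
  ultimately show ?thesis using that qI_add[OF qI_of_lideal[OF a]] by metis
qed

lemma rblock_represents:
  assumes D: "D \<in> cls" and C: "C \<in> cls" and l: "l \<in> Wset G D" and n: "n \<in> Wset G C"
  obtains b' where "b' \<in> rblock G (rideal l) C" "b - b' \<in> qI n l"
proof -
  obtain S f where S: "finite S" "S \<subseteq> cls" "\<forall>C\<in>S. f C \<in> rblock G (rideal l) C"
    and b: "b - sum f S \<in> rideal l"
    using rblock_decomposition[OF D l, where a = b] by blast
  define b' where "b' = (if C \<in> S then f C else 0)"
  have "b' \<in> rblock G (rideal l) C" using S(3) rblock_zero by (simp add: b'_def)
  moreover have "sum f (S - {C}) \<in> qI n l"
    using S by (intro qI_sum rblock_other_class_in_qI[OF C _ _ n]) auto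
  moreover have "b - b' = (b - sum f S) + sum f (S - {C})"
    by (simp add: b'_def sum_diff1[OF S(1)])
  ultimately show ?thesis using that qI_add[OF qI_of_rideal[OF b]] by metis
qed

definition without_component :: "('a set set \<Rightarrow> 'a set) \<Rightarrow> 'a set \<Rightarrow> 'a set set \<Rightarrow> 'a set" where
  "without_component blk N C =
     {y. \<exists>S f. finite S \<and> S \<subseteq> cls \<and> C \<notin> S \<and> (\<forall>C'\<in>S. f C' \<in> blk C') \<and> y - sum f S \<in> N}"

lemma without_component_zero: "0 \<in> N \<Longrightarrow> 0 \<in> without_component blk N C"
  unfolding without_component_def by (intro CollectI exI[of _ "{}"]) simp

lemma without_component_add:
  assumes blk_zero: "\<And>C'. 0 \<in> blk C'"
    and blk_add: "\<And>C' x y. C' \<in> cls \<Longrightarrow> x \<in> blk C' \<Longrightarrow> y \<in> blk C' \<Longrightarrow> x + y \<in> blk C'"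
    and N_add: "\<And>x y. x \<in> N \<Longrightarrow> y \<in> N \<Longrightarrow> x + y \<in> N"
    and y1: "y1 \<in> without_component blk N C" and y2: "y2 \<in> without_component blk N C"
  shows "y1 + y2 \<in> without_component blk N C"
proof -
  obtain S1 f1 where S1: "finite S1" "S1 \<subseteq> cls" "C \<notin> S1" "\<forall>C'\<in>S1. f1 C' \<in> blk C'" "y1 - sum f1 S1 \<in> N"
    using y1 unfolding without_component_def by blast
  obtain S2 f2 where S2: "finite S2" "S2 \<subseteq> cls" "C \<notin> S2" "\<forall>C'\<in>S2. f2 C' \<in> blk C'" "y2 - sum f2 S2 \<in> N"
    using y2 unfolding without_component_def by blast
  define f where "f C' = (if C' \<in> S1 then f1 C' else 0) + (if C' \<in> S2 then f2 C' else 0)" for C'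
  have "sum f (S1 \<union> S2) = sum f1 S1 + sum f2 S2"
    using S1(1) S2(1) by (simp add: f_def sum.distrib sum.inter_restrict[symmetric] Un_Int_eq)
  then have "y1 + y2 - sum f (S1 \<union> S2) \<in> N"
    using N_add[OF S1(5) S2(5)] by (simp add: algebra_simps)
  moreover have "f C' \<in> blk C'" if "C' \<in> S1 \<union> S2" for C'
  proof -
    have "C' \<in> cls" using that S1(2) S2(2) by blast
    then show ?thesis unfolding f_def using S1(4) S2(4) blk_zero by (intro blk_add) auto
  qed
  ultimately show ?thesis unfolding without_component_def using S1 S2
    by (intro CollectI exI[of _ "S1 \<union> S2"] exI[of _ f]) auto
qed

lemma mem_if_without_component:
  assumes indep: "blocks_independent blk N"
    and blk_uminus: "\<And>C' x. C' \<in> cls \<Longrightarrow> x \<in> blk C' \<Longrightarrow> - x \<in> blk C'"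
    and N_add: "\<And>x y. x \<in> N \<Longrightarrow> y \<in> N \<Longrightarrow> x + y \<in> N"
    and C: "C \<in> cls" and a: "a \<in> blk C" and y: "y \<in> without_component blk N C" and ay: "a - y \<in> N"
  shows "a \<in> N"
proof -
  obtain S f where S: "finite S" "S \<subseteq> cls" "C \<notin> S" "\<forall>C'\<in>S. f C' \<in> blk C'" "y - sum f S \<in> N"
    using y unfolding without_component_def by blast
  define g where "g C' = (if C' = C then a else - f C')" for C'
  have "sum g S = sum (\<lambda>C'. - f C') S" by (rule sum.cong) (use S(3) in \<open>auto simp: g_def\<close>)
  then have "sum g (insert C S) = (a - y) + (y - sum f S)" using S(1,3) by (simp add: g_def sum_negf)
  then have "sum g (insert C S) \<in> N" using N_add[OF ay S(5)] by simp
  moreover have "\<forall>C'\<in>insert C S. g C' \<in> blk C'" using a S(2,4) blk_uminus by (auto simp: g_def)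
  ultimately have "g C \<in> N" using indep S(1,2) C unfolding blocks_independent_def by blast
  then show ?thesis by (simp add: g_def)
qed

lemma lblock_injective:
  assumes B: "B \<in> cls" and C: "C \<in> cls" and m: "m \<in> Wset G B" and n: "n \<in> Wset G C"
    and ann: "annihilates_lblock m C n" and a: "a \<in> lblock G (lideal m) C" and "a \<in> qI m n"
  shows "a \<in> lideal m"
proof -
  let ?W = "without_component (lblock G (lideal m)) (lideal m) C"
  have "rideal n \<subseteq> ?W"
    unfolding rideal_eq_finite_sums
  proof (rule finite_sums_least)
    show "0 \<in> ?W" by (rule without_component_zero[OF lideal_zero])
    show "y1 + y2 \<in> ?W" if "y1 \<in> ?W" "y2 \<in> ?W" for y1 y2
      by (rule without_component_add[OF lblock_zero lblock_add lideal_add that])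
    show "{x * c | x c. x \<in> n} \<subseteq> ?W"
    proof
      fix z assume "z \<in> {x * c | x c. x \<in> n}"
      then obtain x c where z: "z = x * c" "x \<in> n" by blast
      obtain S f where S: "finite S" "S \<subseteq> cls" "\<forall>C\<in>S. f C \<in> lblock G (lideal m) C"
        and c: "c - sum f S \<in> lideal m"
        using lblock_decomposition[OF B m, where a = c] by blast
      have "z - (\<Sum>C'\<in>S - {C}. x * f C') = x * (c - sum f S) + x * (if C \<in> S then f C else 0)"
        by (cases "C \<in> S") (simp_all add: z sum_distrib_left[symmetric] sum_diff1[OF S(1)] algebra_simps)
      moreover have "x * (if C \<in> S then f C else 0) \<in> lideal m"
        using ann S(3) z(2) lideal_zero unfolding annihilates_lblock_def by auto
      ultimately have "z - (\<Sum>C'\<in>S - {C}. x * f C') \<in> lideal m"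
        using lideal_add[OF lideal_mult_left[OF c]] by metis
      moreover have "\<forall>C'\<in>S - {C}. x * f C' \<in> lblock G (lideal m) C'"
        using S(2,3) Wset_subset[OF C n z(2)] lblock_mult_left by blast
      ultimately show "z \<in> ?W" unfolding without_component_def using S(1,2)
        by (intro CollectI exI[of _ "S - {C}"] exI[of _ "\<lambda>C'. x * f C'"]) auto
    qed
  qed
  obtain r l where "a = r + l" "r \<in> rideal n" "l \<in> lideal m" using \<open>a \<in> qI m n\<close> by (rule qI_cases)
  then show ?thesis
    using mem_if_without_component[OF lblock_independent[OF B m] lblock_uminus lideal_add C a]
      \<open>rideal n \<subseteq> ?W\<close> by auto
qed

lemma rblock_injective:
  assumes D: "D \<in> cls" and C: "C \<in> cls" and l: "l \<in> Wset G D" and n: "n \<in> Wset G C"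
    and ann: "annihilates_rblock l C n" and b: "b \<in> rblock G (rideal l) C" and "b \<in> qI n l"
  shows "b \<in> rideal l"
proof -
  let ?W = "without_component (rblock G (rideal l)) (rideal l) C"
  have "lideal n \<subseteq> ?W"
    unfolding lideal_eq_finite_sums
  proof (rule finite_sums_least)
    show "0 \<in> ?W" by (rule without_component_zero[OF rideal_zero])
    show "y1 + y2 \<in> ?W" if "y1 \<in> ?W" "y2 \<in> ?W" for y1 y2
      by (rule without_component_add[OF rblock_zero rblock_add rideal_add that])
    show "{c * x | c x. x \<in> n} \<subseteq> ?W"
    proof
      fix z assume "z \<in> {c * x | c x. x \<in> n}"
      then obtain x c where z: "z = c * x" "x \<in> n" by blast
      obtain S f where S: "finite S" "S \<subseteq> cls" "\<forall>C\<in>S. f C \<in> rblock G (rideal l) C"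
        and c: "c - sum f S \<in> rideal l"
        using rblock_decomposition[OF D l, where a = c] by blast
      have "z - (\<Sum>C'\<in>S - {C}. f C' * x) = (c - sum f S) * x + (if C \<in> S then f C else 0) * x"
        by (cases "C \<in> S") (simp_all add: z sum_distrib_right[symmetric] sum_diff1[OF S(1)] algebra_simps)
      moreover have "(if C \<in> S then f C else 0) * x \<in> rideal l"
        using ann S(3) z(2) rideal_zero unfolding annihilates_rblock_def by auto
      ultimately have "z - (\<Sum>C'\<in>S - {C}. f C' * x) \<in> rideal l"
        using rideal_add[OF rideal_mult_right[OF c]] by metis
      moreover have "\<forall>C'\<in>S - {C}. f C' * x \<in> rblock G (rideal l) C'"
        using S(2,3) Wset_subset[OF C n z(2)] rblock_mult_right by blast
      ultimately show "z \<in> ?W" unfolding without_component_def using S(1,2)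
        by (intro CollectI exI[of _ "S - {C}"] exI[of _ "\<lambda>C'. f C' * x"]) auto
    qed
  qed
  obtain r y where "b = r + y" "r \<in> rideal l" "y \<in> lideal n" using \<open>b \<in> qI n l\<close> by (rule qI_cases)
  then show ?thesis
    using mem_if_without_component[OF rblock_independent[OF D l] rblock_uminus rideal_add C b]
      \<open>lideal n \<subseteq> ?W\<close> by auto
qed

end

section \<open>The composition\<close>

context HC_blocks
begin

lemma Alim_lblock_representative:
  assumes B: "B \<in> cls" and C: "C \<in> cls" and \<alpha>: "\<alpha> \<in> Alim G B C"
    and m: "m \<in> Wset G B" and N: "N \<in> Wset G C"
  obtains c where "c \<in> lblock G (lideal m) C" "c \<in> \<alpha> m N"
proof -
  obtain r where r: "\<alpha> m N = coset r (qI m N)" using Alim_coset[OF \<alpha> m N] by blast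
  obtain c where "c \<in> lblock G (lideal m) C" "r - c \<in> qI m N"
    using lblock_represents[OF B C m N, where a = r] by blast
  then show ?thesis using that r qI_uminus by fastforce
qed

lemma Alim_rblock_representative:
  assumes D: "D \<in> cls" and C: "C \<in> cls" and \<beta>: "\<beta> \<in> Alim G C D"
    and l: "l \<in> Wset G D" and N: "N \<in> Wset G C"
  obtains d where "d \<in> rblock G (rideal l) C" "d \<in> \<beta> N l"
proof -
  obtain r where r: "\<beta> N l = coset r (qI N l)" using Alim_coset[OF \<beta> N l] by blast
  obtain d where "d \<in> rblock G (rideal l) C" "r - d \<in> qI N l"
    using rblock_represents[OF D C l N, where b = r] by blast
  then show ?thesis using that r qI_uminus by fastforce
qed

lemma qI_mult_lblock:
  assumes ann: "annihilates_lblock m C n" and c: "c \<in> lblock G (lideal m) C" and q: "q \<in> qI n l"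
  shows "q * c \<in> qI m l"
proof -
  obtain r y where q: "q = r + y" "r \<in> rideal l" "y \<in> lideal n" using q by (rule qI_cases)
  have "lideal n \<subseteq> {y. y * c \<in> lideal m}"
    unfolding lideal_eq_finite_sums[of n]
  proof (rule finite_sums_least)
    show "{a * x | a x. x \<in> n} \<subseteq> {y. y * c \<in> lideal m}"
    proof
      fix z assume "z \<in> {a * x | a x. x \<in> n}"
      then obtain a x where "z = a * x" "x \<in> n" by blast
      then show "z \<in> {y. y * c \<in> lideal m}"
        using ann c lideal_mult_left[of "x * c" m a] unfolding annihilates_lblock_def by (simp add: mult.assoc)
    qed
  qed (auto simp: distrib_right lideal_zero intro: lideal_add)
  then have "r * c + y * c \<in> qI m l" using q by (blast intro: qI_intro rideal_mult_right)
  then show ?thesis using q(1) by (simp add: distrib_right)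
qed

lemma rblock_mult_qI:
  assumes ann: "annihilates_rblock l C n" and d: "d \<in> rblock G (rideal l) C" and q: "q \<in> qI m n"
  shows "d * q \<in> qI m l"
proof -
  obtain r y where q: "q = r + y" "r \<in> rideal n" "y \<in> lideal m" using q by (rule qI_cases)
  have "rideal n \<subseteq> {r. d * r \<in> rideal l}"
    unfolding rideal_eq_finite_sums[of n]
  proof (rule finite_sums_least)
    show "{x * a | x a. x \<in> n} \<subseteq> {r. d * r \<in> rideal l}"
    proof
      fix z assume "z \<in> {x * a | x a. x \<in> n}"
      then obtain a x where "z = x * a" "x \<in> n" by blast
      then show "z \<in> {r. d * r \<in> rideal l}"
        using ann d rideal_mult_right[of "d * x" l a] unfolding annihilates_rblock_def by (simp add: mult.assoc)
    qed
  qed (auto simp: distrib_left rideal_zero intro: rideal_add)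
  then have "d * r + d * y \<in> qI m l" using q by (blast intro: qI_intro lideal_mult_left)
  then show ?thesis using q(1) by (simp add: distrib_left)
qed

lemma common_annihilator:
  assumes B: "B \<in> cls" and C: "C \<in> cls" and D: "D \<in> cls"
    and m: "m \<in> Wset G B" and l: "l \<in> Wset G D" and n: "n \<in> Wset G C"
  obtains N where "N \<in> Wset G C" "N \<subseteq> n" "annihilates_lblock m C N" "annihilates_rblock l C N"
proof -
  obtain n1 where n1: "n1 \<in> Wset G C" "annihilates_lblock m C n1" using lblock_annihilator[OF B m C] by blast
  obtain n2 where n2: "n2 \<in> Wset G C" "annihilates_rblock l C n2" using rblock_annihilator[OF D l C] by blast
  obtain N where "N \<in> Wset G C" "N \<subseteq> n1" "N \<subseteq> n2" "N \<subseteq> n" using Wset_directed3[OF C n1(1) n2(1) n] by blast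
  then show ?thesis
    using that n1(2) n2(2) annihilates_lblock_subset annihilates_rblock_subset by blast
qed

lemma valid_choiceI:
  assumes B: "B \<in> cls" and C: "C \<in> cls" and D: "D \<in> cls"
    and \<alpha>: "\<alpha> \<in> Alim G B C" and \<beta>: "\<beta> \<in> Alim G C D"
    and m: "m \<in> Wset G B" and l: "l \<in> Wset G D" and N: "N \<in> Wset G C"
    and annl: "annihilates_lblock m C N" and annr: "annihilates_rblock l C N"
    and c: "c \<in> lblock G (lideal m) C" "c \<in> \<alpha> m N"
    and d: "d \<in> rblock G (rideal l) C" "d \<in> \<beta> N l"
  shows "valid_choice G C m l \<alpha> \<beta> N c d"
  unfolding valid_choice_def
  using N c d Alim_eq_coset[OF \<alpha> m N c(2)] Alim_eq_coset[OF \<beta> N l d(2)]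
    lblock_represents[OF B C m N] lblock_injective[OF B C m N annl]
    rblock_represents[OF D C l N] rblock_injective[OF D C l N annr]
  by metis

lemma valid_choice_exists:
  assumes B: "B \<in> cls" and C: "C \<in> cls" and D: "D \<in> cls"
    and \<alpha>: "\<alpha> \<in> Alim G B C" and \<beta>: "\<beta> \<in> Alim G C D"
    and m: "m \<in> Wset G B" and l: "l \<in> Wset G D"
  shows "\<exists>n a0 b0. valid_choice G C m l \<alpha> \<beta> n a0 b0"
proof -
  obtain N where N: "N \<in> Wset G C" "annihilates_lblock m C N" "annihilates_rblock l C N"
    using common_annihilator[OF B C D m l Wset.W_one] by blast
  obtain c where "c \<in> lblock G (lideal m) C" "c \<in> \<alpha> m N"
    using Alim_lblock_representative[OF B C \<alpha> m N(1)] by blast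
  moreover obtain d where "d \<in> rblock G (rideal l) C" "d \<in> \<beta> N l"
    using Alim_rblock_representative[OF D C \<beta> l N(1)] by blast
  ultimately show ?thesis using valid_choiceI[OF B C D \<alpha> \<beta> m l N] by blast
qed

lemma valid_choice_annihilates:
  assumes v: "valid_choice G C m l \<alpha> \<beta> n a0 b0" and C: "C \<in> cls"
  shows "annihilates_lblock m C n" "annihilates_rblock l C n"
proof -
  have n: "n \<in> Wset G C" using v unfolding valid_choice_def by blast
  show "annihilates_lblock m C n"
    unfolding annihilates_lblock_def
  proof (intro ballI)
    fix a x assume "a \<in> lblock G (lideal m) C" "x \<in> n"
    then have "x * a \<in> lblock G (lideal m) C" "x * a \<in> qI m n"
      using lblock_mult_left[OF C Wset_subset[OF C n]] qI_of_rideal[OF rideal_generator] by blast+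
    then show "x * a \<in> lideal m" using v unfolding valid_choice_def by blast
  qed
  show "annihilates_rblock l C n"
    unfolding annihilates_rblock_def
  proof (intro ballI)
    fix b x assume "b \<in> rblock G (rideal l) C" "x \<in> n"
    then have "b * x \<in> rblock G (rideal l) C" "b * x \<in> qI n l"
      using rblock_mult_right[OF C Wset_subset[OF C n]] qI_of_lideal[OF lideal_generator] by blast+
    then show "b * x \<in> rideal l" using v unfolding valid_choice_def by blast
  qed
qed

lemma valid_choice_product:
  assumes C: "C \<in> cls" and \<alpha>: "\<alpha> \<in> Alim G B C" and \<beta>: "\<beta> \<in> Alim G C D"
    and m: "m \<in> Wset G B" and l: "l \<in> Wset G D"
    and v: "valid_choice G C m l \<alpha> \<beta> n a0 b0" and N: "N \<in> Wset G C" "N \<subseteq> n"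
    and c: "c \<in> lblock G (lideal m) C" "c \<in> \<alpha> m N" and d: "d \<in> \<beta> N l"
  shows "b0 * a0 - d * c \<in> qI m l"
proof -
  have n: "n \<in> Wset G C" and a0: "\<alpha> m n = coset a0 (qI m n)" and b0: "\<beta> n l = coset b0 (qI n l)"
    and b0_block: "b0 \<in> rblock G (rideal l) C"
    using v unfolding valid_choice_def by blast+
  have "c \<in> \<alpha> m n" using c(2) Alim_mono[OF \<alpha> m m N(1) n _ N(2)] by blast
  then have "a0 - c \<in> qI m n" using a0 qI_uminus by fastforce
  then have "b0 * (a0 - c) \<in> qI m l"
    using rblock_mult_qI[OF valid_choice_annihilates(2)[OF v C] b0_block] by blast
  moreover have "d \<in> \<beta> n l" using d Alim_mono[OF \<beta> N(1) n l l N(2)] by blast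
  then have "b0 - d \<in> qI n l" using b0 qI_uminus by fastforce
  then have "(b0 - d) * c \<in> qI m l" using qI_mult_lblock[OF valid_choice_annihilates(1)[OF v C] c(1)] by blast
  moreover have "b0 * a0 - d * c = b0 * (a0 - c) + (b0 - d) * c" by (simp add: algebra_simps)
  ultimately show ?thesis using qI_add by metis
qed

lemma valid_choice_unique:
  assumes B: "B \<in> cls" and C: "C \<in> cls" and \<alpha>: "\<alpha> \<in> Alim G B C" and \<beta>: "\<beta> \<in> Alim G C D"
    and m: "m \<in> Wset G B" and l: "l \<in> Wset G D"
    and v: "valid_choice G C m l \<alpha> \<beta> n a0 b0" and v': "valid_choice G C m l \<alpha> \<beta> n' a0' b0'"
  shows "coset (b0 * a0) (qI m l) = coset (b0' * a0') (qI m l)"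
proof -
  have "n \<in> Wset G C" "n' \<in> Wset G C" using v v' unfolding valid_choice_def by blast+
  then obtain N where N: "N \<in> Wset G C" "N \<subseteq> n" "N \<subseteq> n'" using Wset_directed[OF C] by blast
  obtain c where c: "c \<in> lblock G (lideal m) C" "c \<in> \<alpha> m N"
    using Alim_lblock_representative[OF B C \<alpha> m N(1)] by blast
  obtain d where d: "d \<in> \<beta> N l" using Alim_nonempty[OF \<beta> N(1) l] by blast
  have "b0 * a0 - d * c \<in> qI m l" "b0' * a0' - d * c \<in> qI m l"
    using valid_choice_product[OF C \<alpha> \<beta> m l v N(1,2) c d] valid_choice_product[OF C \<alpha> \<beta> m l v' N(1,3) c d]
    by blast+
  then have "b0 * a0 - b0' * a0' \<in> qI m l" using qI_diff by fastforce
  then show ?thesis by (rule coset_qI_eqI)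
qed

lemma hc_comp_eq_valid:
  assumes B: "B \<in> cls" and C: "C \<in> cls" and \<alpha>: "\<alpha> \<in> Alim G B C" and \<beta>: "\<beta> \<in> Alim G C D"
    and m: "m \<in> Wset G B" and l: "l \<in> Wset G D" and v: "valid_choice G C m l \<alpha> \<beta> n a0 b0"
  shows "hc_comp G B C D \<beta> \<alpha> m l = coset (b0 * a0) (qI m l)"
proof -
  have "(THE X. \<exists>n a0 b0. valid_choice G C m l \<alpha> \<beta> n a0 b0 \<and> X = coset (b0 * a0) (qI m l)) =
      coset (b0 * a0) (qI m l)"
  proof (rule the_equality)
    show "\<exists>n' a0' b0'. valid_choice G C m l \<alpha> \<beta> n' a0' b0' \<and> coset (b0 * a0) (qI m l) = coset (b0' * a0') (qI m l)"
      using v by blast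
  next
    fix X assume "\<exists>n' a0' b0'. valid_choice G C m l \<alpha> \<beta> n' a0' b0' \<and> X = coset (b0' * a0') (qI m l)"
    then show "X = coset (b0 * a0) (qI m l)" using valid_choice_unique[OF B C \<alpha> \<beta> m l v] by blast
  qed
  then show ?thesis unfolding hc_comp_def using m l by simp
qed

lemma hc_comp_empty: "\<not> (m \<in> Wset G B \<and> l \<in> Wset G D) \<Longrightarrow> hc_comp G B C D \<beta> \<alpha> m l = {}"
  unfolding hc_comp_def by (simp only: if_False)

lemma hc_comp_eq_lblock:
  assumes B: "B \<in> cls" and C: "C \<in> cls" and D: "D \<in> cls"
    and \<alpha>: "\<alpha> \<in> Alim G B C" and \<beta>: "\<beta> \<in> Alim G C D"
    and m: "m \<in> Wset G B" and l: "l \<in> Wset G D" and N: "N \<in> Wset G C"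
    and annl: "annihilates_lblock m C N" and annr: "annihilates_rblock l C N"
    and c: "c \<in> lblock G (lideal m) C" "c \<in> \<alpha> m N" and d: "d \<in> \<beta> N l"
  shows "hc_comp G B C D \<beta> \<alpha> m l = coset (d * c) (qI m l)"
proof -
  obtain d' where d': "d' \<in> rblock G (rideal l) C" "d' \<in> \<beta> N l"
    using Alim_rblock_representative[OF D C \<beta> l N] by blast
  have v: "valid_choice G C m l \<alpha> \<beta> N c d'" by (rule valid_choiceI[OF B C D \<alpha> \<beta> m l N annl annr c d'])
  have "d' - d \<in> qI N l" using d Alim_eq_coset[OF \<beta> N l d'(2)] qI_uminus by fastforce
  then have "(d' - d) * c \<in> qI m l" by (rule qI_mult_lblock[OF annl c(1)])
  then have "coset (d' * c) (qI m l) = coset (d * c) (qI m l)" by (intro coset_qI_eqI) (simp add: algebra_simps)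
  then show ?thesis using hc_comp_eq_valid[OF B C \<alpha> \<beta> m l v] by simp
qed

lemma hc_comp_eq_rblock:
  assumes B: "B \<in> cls" and C: "C \<in> cls" and D: "D \<in> cls"
    and \<alpha>: "\<alpha> \<in> Alim G B C" and \<beta>: "\<beta> \<in> Alim G C D"
    and m: "m \<in> Wset G B" and l: "l \<in> Wset G D" and N: "N \<in> Wset G C"
    and annl: "annihilates_lblock m C N" and annr: "annihilates_rblock l C N"
    and d: "d \<in> rblock G (rideal l) C" "d \<in> \<beta> N l" and c: "c \<in> \<alpha> m N"
  shows "hc_comp G B C D \<beta> \<alpha> m l = coset (d * c) (qI m l)"
proof -
  obtain c' where c': "c' \<in> lblock G (lideal m) C" "c' \<in> \<alpha> m N"
    using Alim_lblock_representative[OF B C \<alpha> m N] by blast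
  have v: "valid_choice G C m l \<alpha> \<beta> N c' d" by (rule valid_choiceI[OF B C D \<alpha> \<beta> m l N annl annr c' d])
  have "c' - c \<in> qI m N" using c Alim_eq_coset[OF \<alpha> m N c'(2)] qI_uminus by fastforce
  then have "d * (c' - c) \<in> qI m l" by (rule rblock_mult_qI[OF annr d(1)])
  then have "coset (d * c') (qI m l) = coset (d * c) (qI m l)" by (intro coset_qI_eqI) (simp add: algebra_simps)
  then show ?thesis using hc_comp_eq_valid[OF B C \<alpha> \<beta> m l v] by simp
qed

lemma hc_comp_in_Alim:
  assumes B: "B \<in> cls" and C: "C \<in> cls" and D: "D \<in> cls"
    and \<alpha>: "\<alpha> \<in> Alim G B C" and \<beta>: "\<beta> \<in> Alim G C D"
  shows "hc_comp G B C D \<beta> \<alpha> \<in> Alim G B D"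
proof (rule AlimI)
  fix m l assume m: "m \<in> Wset G B" and l: "l \<in> Wset G D"
  then obtain n a0 b0 where "valid_choice G C m l \<alpha> \<beta> n a0 b0" using valid_choice_exists[OF B C D \<alpha> \<beta>] by blast
  then show "\<exists>a. hc_comp G B C D \<beta> \<alpha> m l = coset a (qI m l)" using hc_comp_eq_valid[OF B C \<alpha> \<beta> m l] by blast
next
  fix m m' l l' assume m: "m \<in> Wset G B" and m': "m' \<in> Wset G B" and l: "l \<in> Wset G D" and l': "l' \<in> Wset G D"
    and mm': "m \<subseteq> m'" and ll': "l \<subseteq> l'"
  obtain N1 where N1: "N1 \<in> Wset G C" "annihilates_lblock m C N1" "annihilates_rblock l C N1"
    using common_annihilator[OF B C D m l Wset.W_one] by blast
  obtain N where N: "N \<in> Wset G C" "N \<subseteq> N1" "annihilates_lblock m' C N" "annihilates_rblock l' C N"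
    using common_annihilator[OF B C D m' l' N1(1)] by blast
  obtain c where c: "c \<in> lblock G (lideal m) C" "c \<in> \<alpha> m N"
    using Alim_lblock_representative[OF B C \<alpha> m N(1)] by blast
  obtain d where d: "d \<in> \<beta> N l" using Alim_nonempty[OF \<beta> N(1) l] by blast
  have "hc_comp G B C D \<beta> \<alpha> m l = coset (d * c) (qI m l)"
    using hc_comp_eq_lblock[OF B C D \<alpha> \<beta> m l N(1) _ _ c d] N N1 annihilates_lblock_subset annihilates_rblock_subset
    by blast
  moreover have "hc_comp G B C D \<beta> \<alpha> m' l' = coset (d * c) (qI m' l')"
    using c d lblock_mono[OF mm'] Alim_mono[OF \<alpha> m m' N(1) N(1) mm'] Alim_mono[OF \<beta> N(1) N(1) l l' _ ll']
    by (intro hc_comp_eq_lblock[OF B C D \<alpha> \<beta> m' l' N(1) N(3,4)]) auto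
  ultimately show "\<exists>x. x \<in> hc_comp G B C D \<beta> \<alpha> m l \<and> x \<in> hc_comp G B C D \<beta> \<alpha> m' l'"
    using coset_qI_self by blast
qed (rule hc_comp_empty)

end

section \<open>The category laws\<close>

context HC_blocks
begin

lemma Alim_lim_lmult: "C \<in> cls \<Longrightarrow> \<alpha> \<in> Alim G B C \<Longrightarrow> g \<in> G \<Longrightarrow> lim_lmult g \<alpha> \<in> Alim G B C"
  using lim_lmult_in_Alim Wset_mult_left by blast

lemma Alim_lim_rmult: "B \<in> cls \<Longrightarrow> \<alpha> \<in> Alim G B C \<Longrightarrow> g \<in> G \<Longrightarrow> lim_rmult \<alpha> g \<in> Alim G B C"
  using lim_rmult_in_Alim Wset_mult_right by blast

lemma hc_comp_add_right:
  assumes B: "B \<in> cls" and C: "C \<in> cls" and D: "D \<in> cls"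
    and \<alpha>: "\<alpha> \<in> Alim G B C" and \<alpha>': "\<alpha>' \<in> Alim G B C" and \<beta>: "\<beta> \<in> Alim G C D"
  shows "hc_comp G B C D \<beta> (lim_add \<alpha> \<alpha>') = lim_add (hc_comp G B C D \<beta> \<alpha>) (hc_comp G B C D \<beta> \<alpha>')"
proof (rule Alim_eqI[OF hc_comp_in_Alim[OF B C D lim_add_in_Alim[OF \<alpha> \<alpha>'] \<beta>]
      lim_add_in_Alim[OF hc_comp_in_Alim[OF B C D \<alpha> \<beta>] hc_comp_in_Alim[OF B C D \<alpha>' \<beta>]]])
  fix m l assume m: "m \<in> Wset G B" and l: "l \<in> Wset G D"
  obtain N where N: "N \<in> Wset G C" "annihilates_lblock m C N" "annihilates_rblock l C N"
    using common_annihilator[OF B C D m l Wset.W_one] by blast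
  obtain c c' d where c: "c \<in> lblock G (lideal m) C" "c \<in> \<alpha> m N"
    and c': "c' \<in> lblock G (lideal m) C" "c' \<in> \<alpha>' m N" and d: "d \<in> \<beta> N l"
    using Alim_lblock_representative[OF B C _ m N(1)] Alim_nonempty[OF \<beta> N(1) l] \<alpha> \<alpha>' by metis
  have "d * (c + c') \<in> hc_comp G B C D \<beta> (lim_add \<alpha> \<alpha>') m l"
    using hc_comp_eq_lblock[OF B C D lim_add_in_Alim[OF \<alpha> \<alpha>'] \<beta> m l N
        lblock_add[OF C c(1) c'(1)] lim_add_mem[where \<alpha>=\<alpha> and \<beta>=\<alpha>' and m=m and n=N, OF c(2) c'(2)] d]
    by (simp add: qI_zero)
  moreover have "d * c + d * c' \<in> lim_add (hc_comp G B C D \<beta> \<alpha>) (hc_comp G B C D \<beta> \<alpha>') m l"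
    using hc_comp_eq_lblock[OF B C D \<alpha> \<beta> m l N c d] hc_comp_eq_lblock[OF B C D \<alpha>' \<beta> m l N c' d]
    by (intro lim_add_mem) (simp_all add: qI_zero)
  ultimately show "\<exists>x. x \<in> hc_comp G B C D \<beta> (lim_add \<alpha> \<alpha>') m l \<and>
      x \<in> lim_add (hc_comp G B C D \<beta> \<alpha>) (hc_comp G B C D \<beta> \<alpha>') m l"
    by (metis distrib_left)
qed

lemma hc_comp_add_left:
  assumes B: "B \<in> cls" and C: "C \<in> cls" and D: "D \<in> cls"
    and \<alpha>: "\<alpha> \<in> Alim G B C" and \<beta>: "\<beta> \<in> Alim G C D" and \<beta>': "\<beta>' \<in> Alim G C D"
  shows "hc_comp G B C D (lim_add \<beta> \<beta>') \<alpha> = lim_add (hc_comp G B C D \<beta> \<alpha>) (hc_comp G B C D \<beta>' \<alpha>)"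
proof (rule Alim_eqI[OF hc_comp_in_Alim[OF B C D \<alpha> lim_add_in_Alim[OF \<beta> \<beta>']]
      lim_add_in_Alim[OF hc_comp_in_Alim[OF B C D \<alpha> \<beta>] hc_comp_in_Alim[OF B C D \<alpha> \<beta>']]])
  fix m l assume m: "m \<in> Wset G B" and l: "l \<in> Wset G D"
  obtain N where N: "N \<in> Wset G C" "annihilates_lblock m C N" "annihilates_rblock l C N"
    using common_annihilator[OF B C D m l Wset.W_one] by blast
  obtain c d d' where c: "c \<in> lblock G (lideal m) C" "c \<in> \<alpha> m N" and d: "d \<in> \<beta> N l" and d': "d' \<in> \<beta>' N l"
    using Alim_lblock_representative[OF B C \<alpha> m N(1)] Alim_nonempty[OF _ N(1) l] \<beta> \<beta>' by metis
  have "(d + d') * c \<in> hc_comp G B C D (lim_add \<beta> \<beta>') \<alpha> m l"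
    using hc_comp_eq_lblock[OF B C D \<alpha> lim_add_in_Alim[OF \<beta> \<beta>'] m l N c lim_add_mem[where \<alpha>=\<beta> and \<beta>=\<beta>' and m=N and n=l, OF d d']]
    by (simp add: qI_zero)
  moreover have "d * c + d' * c \<in> lim_add (hc_comp G B C D \<beta> \<alpha>) (hc_comp G B C D \<beta>' \<alpha>) m l"
    using hc_comp_eq_lblock[OF B C D \<alpha> \<beta> m l N c d] hc_comp_eq_lblock[OF B C D \<alpha> \<beta>' m l N c d']
    by (intro lim_add_mem) (simp_all add: qI_zero)
  ultimately show "\<exists>x. x \<in> hc_comp G B C D (lim_add \<beta> \<beta>') \<alpha> m l \<and>
      x \<in> lim_add (hc_comp G B C D \<beta> \<alpha>) (hc_comp G B C D \<beta>' \<alpha>) m l"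
    by (metis distrib_right)
qed

lemma hc_comp_balanced:
  assumes B: "B \<in> cls" and C: "C \<in> cls" and D: "D \<in> cls"
    and \<alpha>: "\<alpha> \<in> Alim G B C" and \<beta>: "\<beta> \<in> Alim G C D" and g: "g \<in> G"
  shows "hc_comp G B C D (lim_rmult \<beta> g) \<alpha> = hc_comp G B C D \<beta> (lim_lmult g \<alpha>)"
proof (rule Alim_eqI[OF hc_comp_in_Alim[OF B C D \<alpha> Alim_lim_rmult[OF C \<beta> g]]
      hc_comp_in_Alim[OF B C D Alim_lim_lmult[OF C \<alpha> g] \<beta>]])
  fix m l assume m: "m \<in> Wset G B" and l: "l \<in> Wset G D"
  obtain N where N: "N \<in> Wset G C" "annihilates_lblock m C N" "annihilates_rblock l C N"
    using common_annihilator[OF B C D m l Wset.W_one] by blast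
  obtain c d where c: "c \<in> lblock G (lideal m) C" "c \<in> \<alpha> m N" and d: "d \<in> \<beta> N l"
    using Alim_lblock_representative[OF B C \<alpha> m N(1)] Alim_nonempty[OF \<beta> N(1) l] by metis
  have "(d * g) * c \<in> hc_comp G B C D (lim_rmult \<beta> g) \<alpha> m l"
    using hc_comp_eq_lblock[OF B C D \<alpha> Alim_lim_rmult[OF C \<beta> g] m l N c lim_rmult_mem[where \<alpha>=\<beta> and m=N and n=l, OF d]]
    by (simp add: qI_zero)
  moreover have "d * (g * c) \<in> hc_comp G B C D \<beta> (lim_lmult g \<alpha>) m l"
    using hc_comp_eq_lblock[OF B C D Alim_lim_lmult[OF C \<alpha> g] \<beta> m l N
        lblock_mult_left[OF C g c(1)] lim_lmult_mem[where \<alpha>=\<alpha> and m=m and n=N, OF c(2)] d]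
    by (simp add: qI_zero)
  ultimately show "\<exists>x. x \<in> hc_comp G B C D (lim_rmult \<beta> g) \<alpha> m l \<and> x \<in> hc_comp G B C D \<beta> (lim_lmult g \<alpha>) m l"
    by (metis mult.assoc)
qed

lemma hc_comp_lmult:
  assumes B: "B \<in> cls" and C: "C \<in> cls" and D: "D \<in> cls"
    and \<alpha>: "\<alpha> \<in> Alim G B C" and \<beta>: "\<beta> \<in> Alim G C D" and g: "g \<in> G"
  shows "hc_comp G B C D (lim_lmult g \<beta>) \<alpha> = lim_lmult g (hc_comp G B C D \<beta> \<alpha>)"
proof (rule Alim_eqI[OF hc_comp_in_Alim[OF B C D \<alpha> Alim_lim_lmult[OF D \<beta> g]]
      Alim_lim_lmult[OF D hc_comp_in_Alim[OF B C D \<alpha> \<beta>] g]])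
  fix m l assume m: "m \<in> Wset G B" and l: "l \<in> Wset G D"
  obtain N where N: "N \<in> Wset G C" "annihilates_lblock m C N" "annihilates_rblock l C N"
    using common_annihilator[OF B C D m l Wset.W_one] by blast
  obtain c d where c: "c \<in> lblock G (lideal m) C" "c \<in> \<alpha> m N" and d: "d \<in> \<beta> N l"
    using Alim_lblock_representative[OF B C \<alpha> m N(1)] Alim_nonempty[OF \<beta> N(1) l] by metis
  have "(g * d) * c \<in> hc_comp G B C D (lim_lmult g \<beta>) \<alpha> m l"
    using hc_comp_eq_lblock[OF B C D \<alpha> Alim_lim_lmult[OF D \<beta> g] m l N c lim_lmult_mem[where \<alpha>=\<beta> and m=N and n=l, OF d]]
    by (simp add: qI_zero)
  moreover have "g * (d * c) \<in> lim_lmult g (hc_comp G B C D \<beta> \<alpha>) m l"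
    using hc_comp_eq_lblock[OF B C D \<alpha> \<beta> m l N c d] by (intro lim_lmult_mem) (simp add: qI_zero)
  ultimately show "\<exists>x. x \<in> hc_comp G B C D (lim_lmult g \<beta>) \<alpha> m l \<and> x \<in> lim_lmult g (hc_comp G B C D \<beta> \<alpha>) m l"
    by (metis mult.assoc)
qed

lemma hc_comp_rmult:
  assumes B: "B \<in> cls" and C: "C \<in> cls" and D: "D \<in> cls"
    and \<alpha>: "\<alpha> \<in> Alim G B C" and \<beta>: "\<beta> \<in> Alim G C D" and g: "g \<in> G"
  shows "hc_comp G B C D \<beta> (lim_rmult \<alpha> g) = lim_rmult (hc_comp G B C D \<beta> \<alpha>) g"
proof (rule Alim_eqI[OF hc_comp_in_Alim[OF B C D Alim_lim_rmult[OF B \<alpha> g] \<beta>]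
      Alim_lim_rmult[OF B hc_comp_in_Alim[OF B C D \<alpha> \<beta>] g]])
  fix m l assume m: "m \<in> Wset G B" and l: "l \<in> Wset G D"
  obtain N where N: "N \<in> Wset G C" "annihilates_lblock m C N" "annihilates_rblock l C N"
    using common_annihilator[OF B C D m l Wset.W_one] by blast
  obtain c d where d: "d \<in> rblock G (rideal l) C" "d \<in> \<beta> N l" and c: "c \<in> \<alpha> m N"
    using Alim_rblock_representative[OF D C \<beta> l N(1)] Alim_nonempty[OF \<alpha> m N(1)] by metis
  have "d * (c * g) \<in> hc_comp G B C D \<beta> (lim_rmult \<alpha> g) m l"
    using hc_comp_eq_rblock[OF B C D Alim_lim_rmult[OF B \<alpha> g] \<beta> m l N d lim_rmult_mem[where \<alpha>=\<alpha> and m=m and n=N, OF c]]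
    by (simp add: qI_zero)
  moreover have "(d * c) * g \<in> lim_rmult (hc_comp G B C D \<beta> \<alpha>) g m l"
    using hc_comp_eq_rblock[OF B C D \<alpha> \<beta> m l N d c] by (intro lim_rmult_mem) (simp add: qI_zero)
  ultimately show "\<exists>x. x \<in> hc_comp G B C D \<beta> (lim_rmult \<alpha> g) m l \<and> x \<in> lim_rmult (hc_comp G B C D \<beta> \<alpha>) g m l"
    by (metis mult.assoc)
qed

lemma hc_comp_assoc:
  assumes B: "B \<in> cls" and C: "C \<in> cls" and D: "D \<in> cls" and E: "E \<in> cls"
    and \<alpha>: "\<alpha> \<in> Alim G B C" and \<beta>: "\<beta> \<in> Alim G C D" and \<delta>: "\<delta> \<in> Alim G D E"
  shows "hc_comp G B D E \<delta> (hc_comp G B C D \<beta> \<alpha>) = hc_comp G B C E (hc_comp G C D E \<delta> \<beta>) \<alpha>"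
proof -
  have X: "hc_comp G B C D \<beta> \<alpha> \<in> Alim G B D" by (rule hc_comp_in_Alim[OF B C D \<alpha> \<beta>])
  have Y: "hc_comp G C D E \<delta> \<beta> \<in> Alim G C E" by (rule hc_comp_in_Alim[OF C D E \<beta> \<delta>])
  show ?thesis
  proof (rule Alim_eqI[OF hc_comp_in_Alim[OF B D E X \<delta>] hc_comp_in_Alim[OF B C E \<alpha> Y]])
    fix m e assume m: "m \<in> Wset G B" and e: "e \<in> Wset G E"
    txt \<open>Each annihilator is chosen after the ideals it must annihilate against: N0 for the outer
      composite, then P (also against N0), then N (also against P).\<close>
    obtain N0 where N0: "N0 \<in> Wset G C" "annihilates_lblock m C N0" "annihilates_rblock e C N0"
      using common_annihilator[OF B C E m e Wset.W_one] by blast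
    obtain p where p: "p \<in> Wset G D" "annihilates_lblock N0 D p" using lblock_annihilator[OF C N0(1) D] by blast
    obtain P where P: "P \<in> Wset G D" "P \<subseteq> p" "annihilates_lblock m D P" "annihilates_rblock e D P"
      using common_annihilator[OF B D E m e p(1)] by blast
    obtain N where N: "N \<in> Wset G C" "N \<subseteq> N0" "annihilates_lblock m C N" "annihilates_rblock P C N"
      using common_annihilator[OF B C D m P(1) N0(1)] by blast
    obtain c where c: "c \<in> lblock G (lideal m) C" "c \<in> \<alpha> m N"
      using Alim_lblock_representative[OF B C \<alpha> m N(1)] by blast
    obtain d where d: "d \<in> \<beta> N P" using Alim_nonempty[OF \<beta> N(1) P(1)] by blast
    obtain f where f: "f \<in> rblock G (rideal e) D" "f \<in> \<delta> P e"
      using Alim_rblock_representative[OF E D \<delta> e P(1)] by blast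
    have "d * c \<in> hc_comp G B C D \<beta> \<alpha> m P"
      using hc_comp_eq_lblock[OF B C D \<alpha> \<beta> m P(1) N(1,3,4) c d] by (simp add: qI_zero)
    then have "f * (d * c) \<in> hc_comp G B D E \<delta> (hc_comp G B C D \<beta> \<alpha>) m e"
      using hc_comp_eq_rblock[OF B D E X \<delta> m e P(1,3,4) f] by (simp add: qI_zero)
    moreover have "f * d \<in> hc_comp G C D E \<delta> \<beta> N0 e"
      using hc_comp_eq_rblock[OF C D E \<beta> \<delta> N0(1) e P(1) annihilates_lblock_subset[OF p(2) P(2)] P(4) f]
        d Alim_mono[OF \<beta> N(1) N0(1) P(1) P(1) N(2)] by (auto simp: qI_zero)
    then have "(f * d) * c \<in> hc_comp G B C E (hc_comp G C D E \<delta> \<beta>) \<alpha> m e"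
      using hc_comp_eq_lblock[OF B C E \<alpha> Y m e N0 c(1)] c(2) Alim_mono[OF \<alpha> m m N(1) N0(1) _ N(2)]
      by (auto simp: qI_zero)
    ultimately show "\<exists>x. x \<in> hc_comp G B D E \<delta> (hc_comp G B C D \<beta> \<alpha>) m e \<and>
        x \<in> hc_comp G B C E (hc_comp G C D E \<delta> \<beta>) \<alpha> m e"
      by (metis mult.assoc)
  qed
qed

lemma lim_lmult_eq_hc_comp:
  assumes B: "B \<in> cls" and C: "C \<in> cls" and \<alpha>: "\<alpha> \<in> Alim G B C" and g: "g \<in> G"
  shows "lim_lmult g \<alpha> = hc_comp G B C C (lim_of G C C g) \<alpha>"
proof (rule Alim_eqI[OF Alim_lim_lmult[OF C \<alpha> g] hc_comp_in_Alim[OF B C C \<alpha> lim_of_in_Alim]])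
  fix m n assume m: "m \<in> Wset G B" and n: "n \<in> Wset G C"
  obtain N where N: "N \<in> Wset G C" "N \<subseteq> n" "annihilates_lblock m C N" "annihilates_rblock n C N"
    using common_annihilator[OF B C C m n n] by blast
  obtain c where c: "c \<in> lblock G (lideal m) C" "c \<in> \<alpha> m N"
    using Alim_lblock_representative[OF B C \<alpha> m N(1)] by blast
  have "g * c \<in> hc_comp G B C C (lim_of G C C g) \<alpha> m n"
    using hc_comp_eq_lblock[OF B C C \<alpha> lim_of_in_Alim m n N(1,3,4) c lim_of_mem[OF N(1) n]]
    by (simp add: qI_zero)
  moreover have "g * c \<in> lim_lmult g \<alpha> m n"
    using c(2) Alim_mono[OF \<alpha> m m N(1) n _ N(2)] by (auto intro: lim_lmult_mem)
  ultimately show "\<exists>x. x \<in> lim_lmult g \<alpha> m n \<and> x \<in> hc_comp G B C C (lim_of G C C g) \<alpha> m n" by blast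
qed

lemma lim_rmult_eq_hc_comp:
  assumes B: "B \<in> cls" and C: "C \<in> cls" and \<alpha>: "\<alpha> \<in> Alim G B C" and g: "g \<in> G"
  shows "lim_rmult \<alpha> g = hc_comp G B B C \<alpha> (lim_of G B B g)"
proof (rule Alim_eqI[OF Alim_lim_rmult[OF B \<alpha> g] hc_comp_in_Alim[OF B B C lim_of_in_Alim \<alpha>]])
  fix m n assume m: "m \<in> Wset G B" and n: "n \<in> Wset G C"
  obtain M where M: "M \<in> Wset G B" "M \<subseteq> m" "annihilates_lblock m B M" "annihilates_rblock n B M"
    using common_annihilator[OF B B C m n m] by blast
  obtain d where d: "d \<in> rblock G (rideal n) B" "d \<in> \<alpha> M n"
    using Alim_rblock_representative[OF C B \<alpha> n M(1)] by blast
  have "d * g \<in> hc_comp G B B C \<alpha> (lim_of G B B g) m n"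
    using hc_comp_eq_rblock[OF B B C lim_of_in_Alim \<alpha> m n M(1,3,4) d lim_of_mem[OF m M(1)]]
    by (simp add: qI_zero)
  moreover have "d * g \<in> lim_rmult \<alpha> g m n"
    using d(2) Alim_mono[OF \<alpha> M(1) m n n M(2)] by (auto intro: lim_rmult_mem)
  ultimately show "\<exists>x. x \<in> lim_rmult \<alpha> g m n \<and> x \<in> hc_comp G B B C \<alpha> (lim_of G B B g) m n" by blast
qed

lemma hc_comp_lim_of_one_right: "B \<in> cls \<Longrightarrow> C \<in> cls \<Longrightarrow> \<alpha> \<in> Alim G B C \<Longrightarrow> hc_comp G B B C \<alpha> (lim_of G B B 1) = \<alpha>"
  using lim_rmult_eq_hc_comp[OF _ _ _ one_mem] lim_rmult_one by metis

lemma hc_comp_lim_of_one_left: "B \<in> cls \<Longrightarrow> C \<in> cls \<Longrightarrow> \<alpha> \<in> Alim G B C \<Longrightarrow> hc_comp G B C C (lim_of G C C 1) \<alpha> = \<alpha>"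
  using lim_lmult_eq_hc_comp[OF _ _ _ one_mem] lim_lmult_one by metis

end

lemma HC_blocks_quotient:
  assumes sub: "subalgebra scale G" and eqv: "equiv (cfs scale G) R"
    and HC: "strong_HC_block G (cfs scale G // R)"
  shows "HC_blocks G (cfs scale G // R)"
proof
  show "0 \<in> G" "1 \<in> G" using sub unfolding subalgebra_def by simp_all
  show "x + y \<in> G" "x * y \<in> G" if "x \<in> G" "y \<in> G" for x y using sub that unfolding subalgebra_def by simp_all
  show "- x \<in> G" if "x \<in> G" for x using sub that unfolding subalgebra_def by simp
  show "maximal_ideal G p" if "B \<in> cfs scale G // R" "p \<in> B" for B p
    using in_quotient_imp_subset[OF eqv] that unfolding cfs_def by blast
  show "B \<inter> C = {}" if "B \<in> cfs scale G // R" "C \<in> cfs scale G // R" "B \<noteq> C" for B C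
    using quotient_disj[OF eqv] that by blast
qed (rule HC)

theorem mainTheorem14:
  fixes scale :: "'k::field \<Rightarrow> 'a::ring_1 \<Rightarrow> 'a" and G :: "'a set"
    and R :: "('a set \<times> 'a set) set" and cls :: "'a set set set"
  assumes alg: "k_algebra scale"
    and sub: "subalgebra scale G"
    and eqv: "equiv (cfs scale G) R"
    and cls_def: "cls = cfs scale G // R"
    and HC: "strong_HC_block G cls"
  shows
    \<comment> \<open>well-definedness: admissible choices exist, the result is independent of them,
        and it defines an element of A(B,D)\<close>
    "(\<forall>B\<in>cls. \<forall>C\<in>cls. \<forall>D\<in>cls. \<forall>\<alpha>\<in>Alim G B C. \<forall>\<beta>\<in>Alim G C D.
        (\<forall>m\<in>Wset G B. \<forall>l\<in>Wset G D.
           (\<exists>n a0 b0. valid_choice G C m l \<alpha> \<beta> n a0 b0) \<and>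
           (\<forall>n a0 b0 n' a0' b0'. valid_choice G C m l \<alpha> \<beta> n a0 b0 \<longrightarrow>
               valid_choice G C m l \<alpha> \<beta> n' a0' b0' \<longrightarrow>
               coset (b0 * a0) (qI m l) = coset (b0' * a0') (qI m l))) \<and>
        hc_comp G B C D \<beta> \<alpha> \<in> Alim G B D)
   \<and> \<comment> \<open>bimodule map out of A(C,D) \<otimes>_Gamma A(B,C): biadditive, Gamma-balanced, Gamma-bilinear\<close>
    (\<forall>B\<in>cls. \<forall>C\<in>cls. \<forall>D\<in>cls. \<forall>\<alpha>\<in>Alim G B C. \<forall>\<alpha>'\<in>Alim G B C. \<forall>\<beta>\<in>Alim G C D. \<forall>\<beta>'\<in>Alim G C D.
        hc_comp G B C D \<beta> (lim_add \<alpha> \<alpha>') = lim_add (hc_comp G B C D \<beta> \<alpha>) (hc_comp G B C D \<beta> \<alpha>') \<and>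
        hc_comp G B C D (lim_add \<beta> \<beta>') \<alpha> = lim_add (hc_comp G B C D \<beta> \<alpha>) (hc_comp G B C D \<beta>' \<alpha>) \<and>
        (\<forall>g\<in>G. hc_comp G B C D (lim_rmult \<beta> g) \<alpha> = hc_comp G B C D \<beta> (lim_lmult g \<alpha>) \<and>
                hc_comp G B C D (lim_lmult g \<beta>) \<alpha> = lim_lmult g (hc_comp G B C D \<beta> \<alpha>) \<and>
                hc_comp G B C D \<beta> (lim_rmult \<alpha> g) = lim_rmult (hc_comp G B C D \<beta> \<alpha>) g))
   \<and> \<comment> \<open>associativity\<close>
    (\<forall>B\<in>cls. \<forall>C\<in>cls. \<forall>D\<in>cls. \<forall>E\<in>cls. \<forall>\<alpha>\<in>Alim G B C. \<forall>\<beta>\<in>Alim G C D. \<forall>\<delta>\<in>Alim G D E.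
        hc_comp G B D E \<delta> (hc_comp G B C D \<beta> \<alpha>) = hc_comp G B C E (hc_comp G C D E \<delta> \<beta>) \<alpha>)
   \<and> \<comment> \<open>gamma.alpha = (gamma) o alpha and alpha.gamma = alpha o (gamma)\<close>
    (\<forall>B\<in>cls. \<forall>C\<in>cls. \<forall>\<alpha>\<in>Alim G B C. \<forall>g\<in>G.
        lim_lmult g \<alpha> = hc_comp G B C C (lim_of G C C g) \<alpha> \<and>
        lim_rmult \<alpha> g = hc_comp G B B C \<alpha> (lim_of G B B g))
   \<and> \<comment> \<open>identities (1) \<in> A(B,B)\<close>
    (\<forall>B\<in>cls. lim_of G B B 1 \<in> Alim G B B \<and>
       (\<forall>C\<in>cls. \<forall>\<alpha>\<in>Alim G B C.
          hc_comp G B B C \<alpha> (lim_of G B B 1) = \<alpha> \<and> hc_comp G B C C (lim_of G C C 1) \<alpha> = \<alpha>))"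
proof -
  interpret HC_blocks G cls using HC_blocks_quotient[OF sub eqv] HC cls_def by simp
  show ?thesis
    by (intro conjI ballI allI impI;
      rule valid_choice_exists valid_choice_unique hc_comp_in_Alim hc_comp_add_right
        hc_comp_add_left hc_comp_balanced hc_comp_lmult hc_comp_rmult hc_comp_assoc lim_lmult_eq_hc_comp
        lim_rmult_eq_hc_comp lim_of_in_Alim hc_comp_lim_of_one_right hc_comp_lim_of_one_left;
      assumption)
qed

end
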